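(* Run the algorithm GBGC (described in the context) on input $(\mathbf e_1,f_1),\dots,(\mathbf e_m,f_m)$, with an arbitrary rule for choosing which critical pair to process next and arbitrary choices of reducers during reduction. Suppose the strict partial orders $<$ on $G$ used in the generalized rewritable criterion are admissible, and suppose the algorithm terminates. Then the returned set $G$ is an S-Gröbner basis for $\mathbf M=\langle(\mathbf e_1,f_1),\dots,(\mathbf e_m,f_m)\rangle$ (and hence $\{g:(\mathbf v,g)\in G\}$ is a Gröbner basis of $\langle f_1,\dots,f_m\rangle$ w.r.t. the term order on $R$).
   Context: Setting: $R=K[x_1,\dots,x_n]$ over a field $K$, $f_1,\dots,f_m\in R$, $\mathbf f=(f_1,\dots,f_m)$, $\mathbf e_i$ the $i$-th unit vector of $R^m$, $\mathbf M=\{(\mathbf u,f)\in R^m\times R:\mathbf u\cdot\mathbf f=f\}$. Fix an arbitrary term order $\prec$ on power products of $R$ and an arbitrary term order $\prec$ on terms $x^\alpha\mathbf e_i$ of $R^m$ (not necessarily related). $\mathrm{lpp}$ = leading power product (leading term for vectors), $\mathrm{lc}$ = leading coefficient; $\mathrm{lpp}(0)=0$ is below every nonzero power product/term. $\mathrm{lpp}(\mathbf u)$ is called the signature of $(\mathbf u,f)$. Critical pairs: for $(\mathbf u,f),(\mathbf v,g)\in\mathbf M$ with $f,g\ne0$, $t=\mathrm{lcm}(\mathrm{lpp}(f),\mathrm{lpp}(g))$, $t_f=t/\mathrm{lpp}(f)$, $t_g=t/\mathrm{lpp}(g)$; if $\mathrm{lpp}(t_f\mathbf u)\succeq\mathrm{lpp}(t_g\mathbf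 v)$ then $[t_f(\mathbf u,f),t_g(\mathbf v,g)]$ is a critical pair of $(\mathbf u,f)$ and $(\mathbf v,g)$, with S-polynomial $t_f(\mathbf u,f)-c\,t_g(\mathbf v,g)=(t_f\mathbf u-ct_g\mathbf v,\,t_ff-ct_gg)$, $c=\mathrm{lc}(f)/\mathrm{lc}(g)$. It is called regular if $\mathrm{lpp}(t_f\mathbf u)\succ\mathrm{lpp}(t_g\mathbf v)$. Generalized rewritable criterion: given a finite $B\subset\mathbf M$ with a strict partial order $<$ on $B$, a multiple $t(\mathbf u,f)$ with $(\mathbf u,f)\in B$, $f\ne0$, $t$ a power product, is gen-rewritable by $B$ if there is $(\mathbf u',f')\in B$ with $\mathrm{lpp}(\mathbf u')\mid\mathrm{lpp}(t\mathbf u)$ and $(\mathbf u',f')<(\mathbf u,f)$. A critical pair $[t_f(\mathbf u,f),t_g(\mathbf v,g)]$ is gen-rewritable by $B$ if $t_f(\mathbf u,f)$ or $t_g(\mathbf v,g)$ is. Reduction: $(\mathbf u,f)$ is reducible by $B$ if there is $(\mathbf v,g)\in B$, $g\ne0$, with $\mathrm{lpp}(g)\mid\mathrm{lpp}(f)$ and $\mathrm{lpp}(\mathbf u-ct\mathbf v)=\mathrm{lpp}(\mathbf u)$, where $c=\mathrm{lc}(f)/\mathrm{lc}(g)$, $t=\mathrm{lpp}(f)/\mathrm{lpp}(g)$; it then one-step reduces to $(\mathbf u-ct\mathbf v,f-ctg)$. "Reduce by $B$" means repeating one-step reductions until the element is no longer reducible by $B$. Algorithm GBGC. Initialize $G=\{(\mathbf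 e_i,f_i):1\le i\le m\}$ and CPairs = set of all critical pairs of elements of this $G$; then add $(f_j\mathbf e_i-f_i\mathbf e_j,0)$ to $G$ for all $1\le i<j\le m$. While CPairs is nonempty: choose any critical pair $[t_f(\mathbf u,f),t_g(\mathbf v,g)]$ in CPairs and remove it; if it is regular and not gen-rewritable by the current $G$, then reduce its S-polynomial by the current $G$ to obtain $(\mathbf w,h)$; if $h\ne0$, add to CPairs the critical pair of $(\mathbf w,h)$ and $(\mathbf w',h')$ for every $(\mathbf w',h')\in G$ with $h'\ne0$, and add $(h\mathbf e_i-f_i\mathbf w,0)$ to $G$ for $i=1,\dots,m$; in either case add $(\mathbf w,h)$ to $G$. When CPairs is empty, return $G$. Throughout, $G$ carries a strict partial order $<$ that is updated whenever elements are added, in such a way that the order on the enlarged set restricts to the previous order on the old set. Admissibility: the partial orders are admissible if, for every critical pair $[t_f(\mathbf u,f),t_g(\mathbf v,g)]$ that, when selected from CPairs, is regular and not gen-rewritable by $G$, and whose S-polynomial is reduced to $(\mathbf w,h)$, one has $(\mathbf w,h)<(\mathbf u,f)$ in the updated order on $G\cup\{(\mathbf w,h)\}$. S-Gröbner basis: a finite $G\subset\mathbf M$ such that for every $(\mathbf u,f)\in\mathbf M$ (with $f\ne 0$) there is $(\mathbf v,g)\in G$ with $\mathrm{lpp}(g)\mid\mathrm{lpp}(f)$ and $\mathrm{lpp}(t\mathbf v)\preceq\mathrm{lpp}(\mathbf u)$, where $t=\mathrm{lpp}(f)/\mathrm{lpp}(g)$. *)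

theory Defs
  imports "HOL-Library.Poly_Mapping"
begin

text \<open>Power products in the variables of type 'v (n = CARD('v) variables) are
  finitely supported exponent maps 'v =>0 nat; polynomials of R = K[x_1..x_n] are
  finitely supported maps from power products to coefficients in the field K = 'a.
  Vectors of R^m are maps nat => polynomial, the components 0..m-1 being used
  (component i corresponds to the unit vector e_(i+1) of the paper).
  Terms of R^m are pairs (power product, component index).\<close>

type_synonym 'v pp = "'v \<Rightarrow>\<^sub>0 nat"
type_synonym ('v,'a) mpoly = "'v pp \<Rightarrow>\<^sub>0 'a"
type_synonym ('v,'a) vec = "nat \<Rightarrow> ('v,'a) mpoly"
type_synonym ('v,'a) elem = "('v,'a) vec \<times> ('v,'a) mpoly"

definition term_order :: "('v pp \<Rightarrow> 'v pp \<Rightarrow> bool) \<Rightarrow> bool" where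
  "term_order ord \<longleftrightarrow>
     (\<forall>s. \<not> ord s s) \<and>
     (\<forall>s t u. ord s t \<longrightarrow> ord t u \<longrightarrow> ord s u) \<and>
     (\<forall>s t. s \<noteq> t \<longrightarrow> ord s t \<or> ord t s) \<and>
     (\<forall>s t u. ord s t \<longrightarrow> ord (s + u) (t + u)) \<and>
     (\<forall>t. t \<noteq> 0 \<longrightarrow> ord 0 t)"

definition module_term_order :: "nat \<Rightarrow> ('v pp \<times> nat \<Rightarrow> 'v pp \<times> nat \<Rightarrow> bool) \<Rightarrow> bool" where
  "module_term_order m ord \<longleftrightarrow>
     (\<forall>s i. i < m \<longrightarrow> \<not> ord (s, i) (s, i)) \<and>
     (\<forall>s i t j u k. i < m \<longrightarrow> j < m \<longrightarrow> k < m \<longrightarrow>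
         ord (s, i) (t, j) \<longrightarrow> ord (t, j) (u, k) \<longrightarrow> ord (s, i) (u, k)) \<and>
     (\<forall>s i t j. i < m \<longrightarrow> j < m \<longrightarrow> (s, i) \<noteq> (t, j) \<longrightarrow>
         ord (s, i) (t, j) \<or> ord (t, j) (s, i)) \<and>
     (\<forall>s i t j u. i < m \<longrightarrow> j < m \<longrightarrow> ord (s, i) (t, j) \<longrightarrow> ord (s + u, i) (t + u, j)) \<and>
     (\<forall>t i u. i < m \<longrightarrow> u \<noteq> 0 \<longrightarrow> ord (t, i) (t + u, i))"

definition pp_dvd :: "'v pp \<Rightarrow> 'v pp \<Rightarrow> bool" where
  "pp_dvd s t \<longleftrightarrow> (\<forall>x. Poly_Mapping.lookup s x \<le> Poly_Mapping.lookup t x)"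

text \<open>lcm of power products (pointwise max, as s + (t - s) with truncated minus);
  the quotient t / s for s | t is t - s.\<close>
definition pp_lcm :: "'v pp \<Rightarrow> 'v pp \<Rightarrow> 'v pp" where
  "pp_lcm s t = s + (t - s)"

text \<open>Option-valued leading power products: None represents lpp(0) = 0,
  which lies below every nonzero power product/term.\<close>
definition opt_less :: "('b \<Rightarrow> 'b \<Rightarrow> bool) \<Rightarrow> 'b option \<Rightarrow> 'b option \<Rightarrow> bool" where
  "opt_less ord a b = (case (a, b) of
      (None, Some _) \<Rightarrow> True
    | (Some x, Some y) \<Rightarrow> ord x y
    | _ \<Rightarrow> False)"

definition opt_le :: "('b \<Rightarrow> 'b \<Rightarrow> bool) \<Rightarrow> 'b option \<Rightarrow> 'b option \<Rightarrow> bool" where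
  "opt_le ord a b \<longleftrightarrow> a = b \<or> opt_less ord a b"

definition lpp :: "('v pp \<Rightarrow> 'v pp \<Rightarrow> bool) \<Rightarrow> ('v,'a::zero) mpoly \<Rightarrow> 'v pp option" where
  "lpp ord f = (if f = 0 then None
     else Some (THE t. t \<in> Poly_Mapping.keys f \<and> (\<forall>s\<in>Poly_Mapping.keys f. s \<noteq> t \<longrightarrow> ord s t)))"

definition lc :: "('v pp \<Rightarrow> 'v pp \<Rightarrow> bool) \<Rightarrow> ('v,'a::zero) mpoly \<Rightarrow> 'a" where
  "lc ord f = (case lpp ord f of None \<Rightarrow> 0 | Some t \<Rightarrow> Poly_Mapping.lookup f t)"

definition vterms :: "nat \<Rightarrow> ('v,'a::zero) vec \<Rightarrow> ('v pp \<times> nat) set" where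
  "vterms m u = {(t, i). i < m \<and> t \<in> Poly_Mapping.keys (u i)}"

definition lpp_v :: "('v pp \<times> nat \<Rightarrow> 'v pp \<times> nat \<Rightarrow> bool) \<Rightarrow> nat \<Rightarrow> ('v,'a::zero) vec
    \<Rightarrow> ('v pp \<times> nat) option" where
  "lpp_v ord m u = (if vterms m u = {} then None
     else Some (THE x. x \<in> vterms m u \<and> (\<forall>y\<in>vterms m u. y \<noteq> x \<longrightarrow> ord y x)))"

definition term_dvd :: "('v pp \<times> nat) option \<Rightarrow> ('v pp \<times> nat) option \<Rightarrow> bool" where
  "term_dvd a b = (case (a, b) of
      (None, None) \<Rightarrow> True
    | (Some (s, i), Some (t, j)) \<Rightarrow> i = j \<and> pp_dvd s t
    | _ \<Rightarrow> False)"

definition monom :: "'v pp \<Rightarrow> 'a \<Rightarrow> ('v,'a::zero) mpoly" where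
  "monom t c = Poly_Mapping.single t c"

definition unitv :: "nat \<Rightarrow> ('v,'a::comm_ring_1) vec" where
  "unitv i = (\<lambda>k. if k = i then 1 else 0)"

definition vscale :: "('v,'a::comm_ring_1) mpoly \<Rightarrow> ('v,'a) vec \<Rightarrow> ('v,'a) vec" where
  "vscale p u = (\<lambda>k. p * u k)"

definition vsub :: "('v,'a::comm_ring_1) vec \<Rightarrow> ('v,'a) vec \<Rightarrow> ('v,'a) vec" where
  "vsub u v = (\<lambda>k. u k - v k)"

definition Mmod :: "nat \<Rightarrow> (nat \<Rightarrow> ('v,'a::comm_ring_1) mpoly) \<Rightarrow> ('v,'a) elem set" where
  "Mmod m f = {(u, p). (\<forall>i\<ge>m. u i = 0) \<and> p = (\<Sum>i<m. u i * f i)}"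

definition is_SGB :: "('v pp \<Rightarrow> 'v pp \<Rightarrow> bool) \<Rightarrow> ('v pp \<times> nat \<Rightarrow> 'v pp \<times> nat \<Rightarrow> bool)
    \<Rightarrow> nat \<Rightarrow> (nat \<Rightarrow> ('v,'a::field) mpoly) \<Rightarrow> ('v,'a) elem set \<Rightarrow> bool" where
  "is_SGB ordR ordM m f B \<longleftrightarrow> finite B \<and> B \<subseteq> Mmod m f \<and>
     (\<forall>(u, p)\<in>Mmod m f. p \<noteq> 0 \<longrightarrow>
        (\<exists>(v, g)\<in>B. g \<noteq> 0 \<and> pp_dvd (the (lpp ordR g)) (the (lpp ordR p)) \<and>
           opt_le ordM
             (lpp_v ordM m (vscale (monom (the (lpp ordR p) - the (lpp ordR g)) 1) v))
             (lpp_v ordM m u)))"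

text \<open>Elements of G are referred to by their index in the list G (so that equal
  values added at different times are distinct elements). For indices a, b:
  t_a = lcm(lpp f_a, lpp f_b) / lpp f_a.\<close>
definition cp_mult :: "('v pp \<Rightarrow> 'v pp \<Rightarrow> bool) \<Rightarrow> ('v,'a::field) elem list \<Rightarrow> nat \<Rightarrow> nat \<Rightarrow> 'v pp" where
  "cp_mult ordR G a b =
     pp_lcm (the (lpp ordR (snd (G ! a)))) (the (lpp ordR (snd (G ! b)))) - the (lpp ordR (snd (G ! a)))"

definition cp_sig :: "('v pp \<Rightarrow> 'v pp \<Rightarrow> bool) \<Rightarrow> ('v pp \<times> nat \<Rightarrow> 'v pp \<times> nat \<Rightarrow> bool) \<Rightarrow> nat
    \<Rightarrow> ('v,'a::field) elem list \<Rightarrow> nat \<Rightarrow> nat \<Rightarrow> ('v pp \<times> nat) option" where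
  "cp_sig ordR ordM m G a b = lpp_v ordM m (vscale (monom (cp_mult ordR G a b) 1) (fst (G ! a)))"

definition orient :: "('v pp \<Rightarrow> 'v pp \<Rightarrow> bool) \<Rightarrow> ('v pp \<times> nat \<Rightarrow> 'v pp \<times> nat \<Rightarrow> bool) \<Rightarrow> nat
    \<Rightarrow> ('v,'a::field) elem list \<Rightarrow> nat \<Rightarrow> nat \<Rightarrow> nat \<times> nat" where
  "orient ordR ordM m G a b =
     (if opt_le ordM (cp_sig ordR ordM m G b a) (cp_sig ordR ordM m G a b) then (a, b) else (b, a))"

definition cp_regular :: "('v pp \<Rightarrow> 'v pp \<Rightarrow> bool) \<Rightarrow> ('v pp \<times> nat \<Rightarrow> 'v pp \<times> nat \<Rightarrow> bool) \<Rightarrow> nat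
    \<Rightarrow> ('v,'a::field) elem list \<Rightarrow> nat \<Rightarrow> nat \<Rightarrow> bool" where
  "cp_regular ordR ordM m G a b \<longleftrightarrow>
     opt_less ordM (cp_sig ordR ordM m G b a) (cp_sig ordR ordM m G a b)"

definition spoly :: "('v pp \<Rightarrow> 'v pp \<Rightarrow> bool) \<Rightarrow> ('v,'a::field) elem list \<Rightarrow> nat \<Rightarrow> nat \<Rightarrow> ('v,'a) elem" where
  "spoly ordR G a b =
     (let ta = cp_mult ordR G a b; tb = cp_mult ordR G b a;
          c = lc ordR (snd (G ! a)) / lc ordR (snd (G ! b))
      in (vsub (vscale (monom ta 1) (fst (G ! a))) (vscale (monom tb c) (fst (G ! b))),
          monom ta 1 * snd (G ! a) - monom tb c * snd (G ! b)))"

definition mult_rewritable :: "('v pp \<times> nat \<Rightarrow> 'v pp \<times> nat \<Rightarrow> bool) \<Rightarrow> nat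
    \<Rightarrow> ('v,'a::field) elem list \<Rightarrow> (nat \<Rightarrow> nat \<Rightarrow> bool) \<Rightarrow> 'v pp \<Rightarrow> nat \<Rightarrow> bool" where
  "mult_rewritable ordM m G lt t a \<longleftrightarrow>
     (\<exists>k<length G. term_dvd (lpp_v ordM m (fst (G ! k)))
                             (lpp_v ordM m (vscale (monom t 1) (fst (G ! a)))) \<and> lt k a)"

definition cp_rewritable :: "('v pp \<Rightarrow> 'v pp \<Rightarrow> bool) \<Rightarrow> ('v pp \<times> nat \<Rightarrow> 'v pp \<times> nat \<Rightarrow> bool) \<Rightarrow> nat
    \<Rightarrow> ('v,'a::field) elem list \<Rightarrow> (nat \<Rightarrow> nat \<Rightarrow> bool) \<Rightarrow> nat \<Rightarrow> nat \<Rightarrow> bool" where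
  "cp_rewritable ordR ordM m G lt a b \<longleftrightarrow>
     mult_rewritable ordM m G lt (cp_mult ordR G a b) a \<or>
     mult_rewritable ordM m G lt (cp_mult ordR G b a) b"

definition red1 :: "('v pp \<Rightarrow> 'v pp \<Rightarrow> bool) \<Rightarrow> ('v pp \<times> nat \<Rightarrow> 'v pp \<times> nat \<Rightarrow> bool) \<Rightarrow> nat
    \<Rightarrow> ('v,'a::field) elem list \<Rightarrow> ('v,'a) elem \<Rightarrow> ('v,'a) elem \<Rightarrow> bool" where
  "red1 ordR ordM m G x y \<longleftrightarrow>
     (\<exists>k<length G.
        let (v, g) = G ! k; (u, f) = x;
            c = lc ordR f / lc ordR g; t = the (lpp ordR f) - the (lpp ordR g)
        in g \<noteq> 0 \<and> f \<noteq> 0 \<and> pp_dvd (the (lpp ordR g)) (the (lpp ordR f)) \<and>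
           lpp_v ordM m (vsub u (vscale (monom t c) v)) = lpp_v ordM m u \<and>
           y = (vsub u (vscale (monom t c) v), f - monom t c * g))"

type_synonym ('v,'a) gstate = "('v,'a) elem list \<times> (nat \<times> nat) set \<times> (nat \<Rightarrow> nat \<Rightarrow> bool)"

definition gG :: "('v,'a) gstate \<Rightarrow> ('v,'a) elem list" where "gG s = fst s"
definition gCP :: "('v,'a) gstate \<Rightarrow> (nat \<times> nat) set" where "gCP s = fst (snd s)"
definition glt :: "('v,'a) gstate \<Rightarrow> nat \<Rightarrow> nat \<Rightarrow> bool" where "glt s = snd (snd s)"

definition spo_on :: "nat \<Rightarrow> (nat \<Rightarrow> nat \<Rightarrow> bool) \<Rightarrow> bool" where
  "spo_on N lt \<longleftrightarrow> (\<forall>x y. lt x y \<longrightarrow> x < N \<and> y < N) \<and> (\<forall>x. \<not> lt x x) \<and>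
     (\<forall>x y z. lt x y \<longrightarrow> lt y z \<longrightarrow> lt x z)"

definition G_init :: "nat \<Rightarrow> (nat \<Rightarrow> ('v,'a::field) mpoly) \<Rightarrow> ('v,'a) elem list" where
  "G_init m f = map (\<lambda>i. (unitv i, f i)) [0..<m] @
     concat (map (\<lambda>i. map (\<lambda>j. (vsub (vscale (f j) (unitv i)) (vscale (f i) (unitv j)), 0))
                         [Suc i..<m]) [0..<m])"

definition CP_init :: "('v pp \<Rightarrow> 'v pp \<Rightarrow> bool) \<Rightarrow> ('v pp \<times> nat \<Rightarrow> 'v pp \<times> nat \<Rightarrow> bool) \<Rightarrow> nat
    \<Rightarrow> (nat \<Rightarrow> ('v,'a::field) mpoly) \<Rightarrow> (nat \<times> nat) set" where
  "CP_init ordR ordM m f =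
     {orient ordR ordM m (G_init m f) i j | i j. i < j \<and> j < m \<and> f i \<noteq> 0 \<and> f j \<noteq> 0}"

definition gbgc_init :: "('v pp \<Rightarrow> 'v pp \<Rightarrow> bool) \<Rightarrow> ('v pp \<times> nat \<Rightarrow> 'v pp \<times> nat \<Rightarrow> bool) \<Rightarrow> nat
    \<Rightarrow> (nat \<Rightarrow> ('v,'a::field) mpoly) \<Rightarrow> ('v,'a) gstate \<Rightarrow> bool" where
  "gbgc_init ordR ordM m f s \<longleftrightarrow>
     gG s = G_init m f \<and> gCP s = CP_init ordR ordM m f \<and> spo_on (length (G_init m f)) (glt s)"

text \<open>One iteration of the while loop, processing the critical pair (a, b).
  The reduction result (w, h) is any element reachable by one-step reductions
  that is not further reducible (arbitrary choice of reducers). The new order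
  is arbitrary, subject to being a strict partial order on the enlarged G
  restricting to the old one on the old G. The new element (w,h) gets index
  length G (it is appended first, followed by the syzygies when h is nonzero).\<close>
definition gbgc_step :: "('v pp \<Rightarrow> 'v pp \<Rightarrow> bool) \<Rightarrow> ('v pp \<times> nat \<Rightarrow> 'v pp \<times> nat \<Rightarrow> bool) \<Rightarrow> nat
    \<Rightarrow> (nat \<Rightarrow> ('v,'a::field) mpoly) \<Rightarrow> ('v,'a) gstate \<Rightarrow> nat \<times> nat \<Rightarrow> ('v,'a) gstate \<Rightarrow> bool" where
  "gbgc_step ordR ordM m f s ab s' \<longleftrightarrow>
     (let (a, b) = ab; G = gG s in
      ab \<in> gCP s \<and>
      (if cp_regular ordR ordM m G a b \<and> \<not> cp_rewritable ordR ordM m G (glt s) a b then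
         (\<exists>w h. (red1 ordR ordM m G)\<^sup>*\<^sup>* (spoly ordR G a b) (w, h) \<and>
                \<not> (\<exists>y. red1 ordR ordM m G (w, h) y) \<and>
                gG s' = G @ [(w, h)] @
                   (if h \<noteq> 0 then map (\<lambda>i. (vsub (vscale h (unitv i)) (vscale (f i) w), 0)) [0..<m]
                    else []) \<and>
                gCP s' = (gCP s - {ab}) \<union>
                   (if h \<noteq> 0 then {orient ordR ordM m (gG s') (length G) j | j.
                                      j < length G \<and> snd (G ! j) \<noteq> 0}
                    else {}) \<and>
                spo_on (length (gG s')) (glt s') \<and>
                (\<forall>x y. x < length G \<longrightarrow> y < length G \<longrightarrow> glt s' x y = glt s x y))
       else s' = (gG s, gCP s - {ab}, glt s)))"

text \<open>A terminating run: states ss!0, ..., ss!N and chosen pairs cps!0, ..., cps!(N-1),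
  ending with an empty set of critical pairs; the output is gG (last ss).\<close>
definition gbgc_run :: "('v pp \<Rightarrow> 'v pp \<Rightarrow> bool) \<Rightarrow> ('v pp \<times> nat \<Rightarrow> 'v pp \<times> nat \<Rightarrow> bool) \<Rightarrow> nat
    \<Rightarrow> (nat \<Rightarrow> ('v,'a::field) mpoly) \<Rightarrow> ('v,'a) gstate list \<Rightarrow> (nat \<times> nat) list \<Rightarrow> bool" where
  "gbgc_run ordR ordM m f ss cps \<longleftrightarrow>
     length ss = Suc (length cps) \<and>
     gbgc_init ordR ordM m f (ss ! 0) \<and>
     (\<forall>k<length cps. gbgc_step ordR ordM m f (ss ! k) (cps ! k) (ss ! Suc k)) \<and>
     gCP (last ss) = {}"

text \<open>Admissibility of the orders along the run: whenever the selected pair (a, b)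
  is regular and not gen-rewritable, the new element (w, h) (index length G)
  is below (u_a, f_a) in the updated order.\<close>
definition gbgc_admissible :: "('v pp \<Rightarrow> 'v pp \<Rightarrow> bool) \<Rightarrow> ('v pp \<times> nat \<Rightarrow> 'v pp \<times> nat \<Rightarrow> bool) \<Rightarrow> nat
    \<Rightarrow> ('v,'a::field) gstate list \<Rightarrow> (nat \<times> nat) list \<Rightarrow> bool" where
  "gbgc_admissible ordR ordM m ss cps \<longleftrightarrow>
     (\<forall>k<length cps. let (a, b) = cps ! k; G = gG (ss ! k) in
        cp_regular ordR ordM m G a b \<and> \<not> cp_rewritable ordR ordM m G (glt (ss ! k)) a b \<longrightarrow>
        glt (ss ! Suc k) (length G) a)"

end

theory Submission
  imports Defs "HOL-Library.Ramsey"
begin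

text \<open>
  The proof separates a static criterion from the analysis of the run.
  \<^item> The criterion (locale rewrite_closed): if a list G of elements of M contains the
    generators (e_i, f_i) and every regular critical pair of G is gen-rewritable by G,
    then G is an S-Groebner basis. For each signature T let the rewriter of T be a
    lt-minimal element of G whose signature divides T. By well-founded induction on
    signatures, the multiple of the rewriter with signature T is never reducible below
    T; otherwise two rewriters would have multiples with a common leading power product
    at different signatures, their critical pair would be regular and hence
    gen-rewritable, contradicting minimality. Since the leading power product of an
    element of M that is not reducible below its signature is determined by the
    signature, rewriters supply the divisors required by the definition.
  \<^item> The run analysis (locale terminated_run): G only grows, stays in M, and every pair
    of its elements with nonzero polynomials is pending or has been selected. As no
    pairs are left at the end, each regular pair was selected once; then it was either
    gen-rewritable already, or it was reduced to a new element, which by admissibility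
    is below its first component and has the same signature. Either way it is
    gen-rewritable by the output, so the criterion applies.
  Well-foundedness of the module order (a form of Dickson's lemma) uses that there are
  finitely many variables.
\<close>

abbreviation lookup where "lookup \<equiv> Poly_Mapping.lookup"
abbreviation keys where "keys \<equiv> Poly_Mapping.keys"

text \<open>Leading power products and signatures are defined by definite description
  as the maximum of a finite set with respect to a strict total order.\<close>
definition is_max :: "('b \<Rightarrow> 'b \<Rightarrow> bool) \<Rightarrow> 'b set \<Rightarrow> 'b \<Rightarrow> bool" where
  "is_max R A x \<longleftrightarrow> x \<in> A \<and> (\<forall>y\<in>A. y \<noteq> x \<longrightarrow> R y x)"

lemma is_max_exists:
  assumes "finite A" "A \<noteq> {}" "\<forall>x\<in>A. \<forall>y\<in>A. x \<noteq> y \<longrightarrow> R x y \<or> R y x"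
    "\<forall>x y z. x\<in>A \<longrightarrow> y\<in>A \<longrightarrow> z\<in>A \<longrightarrow> R x y \<longrightarrow> R y z \<longrightarrow> R x z"
  shows "\<exists>x. is_max R A x"
  using assms
proof (induction A rule: finite_ne_induct)
  case (singleton x) have "is_max R {x} x" by (simp add: is_max_def) then show ?case by blast
next
  case (insert a A)
  have "\<exists>x. is_max R A x"
  proof (rule insert.IH)
    show "\<forall>x\<in>A. \<forall>y\<in>A. x \<noteq> y \<longrightarrow> R x y \<or> R y x"
      by (intro ballI impI, rule insert.prems(1)[rule_format]) auto
    show "\<forall>x y z. x\<in>A \<longrightarrow> y\<in>A \<longrightarrow> z\<in>A \<longrightarrow> R x y \<longrightarrow> R y z \<longrightarrow> R x z"
      by (intro allI impI, rule insert.prems(2)[rule_format]) auto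
  qed
  then obtain x where x: "is_max R A x" by blast
  show ?case
  proof (cases "R x a")
    case True
    have "is_max R (insert a A) a" unfolding is_max_def
    proof (intro conjI ballI impI)
      fix y assume y: "y \<in> insert a A" "y \<noteq> a"
      show "R y a"
      proof (cases "y = x")
        case True then show ?thesis using \<open>R x a\<close> by simp
      next
        case False
        then have "R y x" using x y unfolding is_max_def by auto
        have "y \<in> insert a A" "x \<in> insert a A" "a \<in> insert a A" using x y unfolding is_max_def by auto
        then show ?thesis using \<open>R x a\<close> \<open>R y x\<close> insert.prems(2)[rule_format, of y x a] by simp
      qed
    qed simp
    then show ?thesis by blast
  next
    case False
    have "x \<in> A" using x by (simp add: is_max_def)
    then have "a \<noteq> x" using insert.hyps by auto
    moreover have "a \<in> insert a A" "x \<in> insert a A" using \<open>x \<in> A\<close> by auto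
    ultimately have "R a x" using False insert.prems(1)[rule_format, of a x] by simp
    then have "is_max R (insert a A) x" using x by (auto simp: is_max_def)
    then show ?thesis by blast
  qed
qed

lemma is_max_unique:
  assumes "is_max R A x" "is_max R A y" "\<forall>x\<in>A. \<not> R x x"
    "\<forall>x y z. x\<in>A \<longrightarrow> y\<in>A \<longrightarrow> z\<in>A \<longrightarrow> R x y \<longrightarrow> R y z \<longrightarrow> R x z"
  shows "x = y"
proof (rule ccontr)
  assume "x \<noteq> y"
  then have "R x y" "R y x" using assms(1,2) unfolding is_max_def by auto
  moreover have "x \<in> A" "y \<in> A" using assms(1,2) unfolding is_max_def by auto
  ultimately show False using assms(3) assms(4)[rule_format, of x y x] by simp
qed

lemma the_is_max:
  assumes "is_max R A x" "\<forall>x\<in>A. \<not> R x x"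
    "\<forall>x y z. x\<in>A \<longrightarrow> y\<in>A \<longrightarrow> z\<in>A \<longrightarrow> R x y \<longrightarrow> R y z \<longrightarrow> R x z"
  shows "(THE t. t \<in> A \<and> (\<forall>s\<in>A. s \<noteq> t \<longrightarrow> R s t)) = x"
proof (rule the_equality)
  show "x \<in> A \<and> (\<forall>s\<in>A. s \<noteq> x \<longrightarrow> R s x)" using assms(1) by (simp add: is_max_def)
  fix t assume "t \<in> A \<and> (\<forall>s\<in>A. s \<noteq> t \<longrightarrow> R s t)"
  then have "is_max R A t" by (simp add: is_max_def)
  then show "t = x" by (rule is_max_unique[OF _ assms(1) assms(2,3)])
qed

lemma lookup_single_mult_add:
  fixes g :: "'k::cancel_comm_monoid_add \<Rightarrow>\<^sub>0 'a::comm_ring_1"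
  shows "lookup (Poly_Mapping.single s c * g) (s + t) = c * lookup g t"
proof -
  have "lookup (Poly_Mapping.single s c * g) (s + t) =
      (\<Sum>l. (c when s = l) * (\<Sum>q. lookup g q when s + t = l + q))"
    by (simp add: lookup_mult lookup_single)
  also have "\<dots> = c * (\<Sum>q. lookup g q when s + t = s + q)"
    by (simp add: when_mult)
  also have "(\<Sum>q. lookup g q when s + t = s + q) = (\<Sum>q. lookup g q when q = t)"
    by (rule Sum_any.cong) (auto simp: when_def)
  finally show ?thesis by simp
qed

lemma lookup_single_mult_other:
  fixes g :: "'k::cancel_comm_monoid_add \<Rightarrow>\<^sub>0 'a::comm_ring_1"
  assumes "\<forall>t. x \<noteq> s + t"
  shows "lookup (Poly_Mapping.single s c * g) x = 0"
proof -
  have "lookup (Poly_Mapping.single s c * g) x =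
      (\<Sum>l. (c when s = l) * (\<Sum>q. lookup g q when x = l + q))"
    by (simp add: lookup_mult lookup_single)
  also have "\<dots> = c * (\<Sum>q. lookup g q when x = s + q)"
    by (simp add: when_mult)
  also have "(\<Sum>q. lookup g q when x = s + q) = (\<Sum>q::'k. 0)"
    by (rule Sum_any.cong) (use assms in \<open>auto simp: when_def\<close>)
  finally show ?thesis by simp
qed

lemma keys_monom_mult:
  fixes g :: "('v, 'a::field) mpoly"
  assumes "c \<noteq> 0"
  shows "keys (monom s c * g) = (\<lambda>t. s + t) ` keys g"
proof (intro set_eqI iffI)
  fix x assume x: "x \<in> keys (monom s c * g)"
  show "x \<in> (\<lambda>t. s + t) ` keys g"
  proof (cases "\<exists>t. x = s + t")
    case True
    then obtain t where "x = s + t" by blast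
    then show ?thesis using x by (auto simp: monom_def in_keys_iff lookup_single_mult_add)
  next
    case False
    then show ?thesis using x lookup_single_mult_other[of x s c g] by (auto simp: monom_def in_keys_iff)
  qed
next
  fix x assume "x \<in> (\<lambda>t. s + t) ` keys g"
  then show "x \<in> keys (monom s c * g)"
    using assms by (auto simp: monom_def in_keys_iff lookup_single_mult_add)
qed

lemma pp_dvd_imp_eq_add: "pp_dvd (s::'v pp) t \<Longrightarrow> t = s + (t - s)"
  by (rule poly_mapping_eqI) (simp add: lookup_add lookup_minus pp_dvd_def)

lemma pp_dvd_refl: "pp_dvd s s"
  by (simp add: pp_dvd_def)

lemma pp_dvd_trans: "pp_dvd s t \<Longrightarrow> pp_dvd t u \<Longrightarrow> pp_dvd s u"
  unfolding pp_dvd_def using le_trans by blast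

lemma pp_dvd_plus: "pp_dvd s (u + s)"
  by (simp add: pp_dvd_def lookup_add)

lemma pp_lcm_comm: "pp_lcm (a::'v pp) b = pp_lcm b a"
  by (rule poly_mapping_eqI) (simp add: pp_lcm_def lookup_add lookup_minus)

text \<open>This is what makes a coincidence of leading terms a multiple of a critical pair.\<close>
lemma pp_lcm_split:
  fixes a b s s' :: "'v pp"
  assumes "s + a = s' + b"
  shows "s = (s + a - pp_lcm a b) + (pp_lcm a b - a)"
    and "s' = (s + a - pp_lcm a b) + (pp_lcm a b - b)"
proof -
  have e: "lookup s v + lookup a v = lookup s' v + lookup b v" for v
    using arg_cong[OF assms, of "\<lambda>x. lookup x v"] by (simp add: lookup_add)
  show "s = (s + a - pp_lcm a b) + (pp_lcm a b - a)"
  proof (rule poly_mapping_eqI)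
    fix v show "lookup s v = lookup (s + a - pp_lcm a b + (pp_lcm a b - a)) v"
      using e[of v] by (simp add: pp_lcm_def lookup_add lookup_minus)
  qed
  show "s' = (s + a - pp_lcm a b) + (pp_lcm a b - b)"
  proof (rule poly_mapping_eqI)
    fix v show "lookup s' v = lookup (s + a - pp_lcm a b + (pp_lcm a b - b)) v"
      using e[of v] by (simp add: pp_lcm_def lookup_add lookup_minus)
  qed
qed

lemma term_dvd_SomeD:
  assumes "term_dvd x (Some (b, j))"
  shows "\<exists>a. x = Some (a, j) \<and> pp_dvd a b"
  using assms by (cases x) (auto simp: term_dvd_def)

lemma Mmod_diff:
  fixes u :: "('v,'a::field) vec"
  assumes "(u, p) \<in> Mmod m f" "(v, g) \<in> Mmod m f"
  shows "(vsub u (vscale q v), p - q * g) \<in> Mmod m f"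
  using assms by (simp add: Mmod_def vsub_def vscale_def left_diff_distrib sum_subtractf
      sum_distrib_left mult.assoc)

lemma Mmod_scale:
  fixes v :: "('v,'a::field) vec"
  assumes "(v, g) \<in> Mmod m f"
  shows "(vscale q v, q * g) \<in> Mmod m f"
  using assms by (simp add: Mmod_def vscale_def sum_distrib_left mult.assoc)

lemma Mmod_unit:
  assumes "i < m"
  shows "(unitv i, f i) \<in> Mmod m (f :: nat \<Rightarrow> ('v,'a::field) mpoly)"
proof -
  have "(\<Sum>l<m. unitv i l * f l) = (\<Sum>l<m. if l = i then f l else 0)"
    by (rule sum.cong) (auto simp: unitv_def)
  also have "\<dots> = f i" using assms by simp
  finally show ?thesis using assms by (simp add: Mmod_def unitv_def)
qed

lemma Mmod_syzygy:
  fixes w :: "('v,'a::field) vec"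
  assumes "(w, h) \<in> Mmod m f" "i < m"
  shows "(vsub (vscale h (unitv i)) (vscale (f i) w), 0) \<in> Mmod m f"
proof -
  have wz: "\<forall>l\<ge>m. w l = 0" and hs: "h = (\<Sum>l<m. w l * f l)" using assms(1) by (auto simp: Mmod_def)
  have "(\<Sum>l<m. (h * unitv i l - f i * w l) * f l) = (\<Sum>l<m. h * (unitv i l * f l)) - (\<Sum>l<m. f i * (w l * f l))"
    by (simp add: left_diff_distrib sum_subtractf mult.assoc)
  also have "(\<Sum>l<m. h * (unitv i l * f l)) = h * f i"
    using Mmod_unit[OF assms(2), of f] by (simp add: Mmod_def sum_distrib_left[symmetric])
  also have "(\<Sum>l<m. f i * (w l * f l)) = f i * h" by (simp add: hs sum_distrib_left)
  finally have "(\<Sum>l<m. (h * unitv i l - f i * w l) * f l) = 0" by simp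
  moreover have "\<forall>l\<ge>m. h * unitv i l - f i * w l = 0" using wz assms(2) by (simp add: unitv_def)
  ultimately show ?thesis by (simp add: Mmod_def vsub_def vscale_def)
qed

section \<open>Leading power products and signatures\<close>

lemma term_orderD:
  assumes "term_order ord"
  shows "\<not> ord s s" and "ord s t \<Longrightarrow> ord t u \<Longrightarrow> ord s u"
    and "s \<noteq> t \<Longrightarrow> ord s t \<or> ord t s" and "ord s t \<Longrightarrow> ord (s + u) (t + u)"
  using assms unfolding term_order_def by blast+

lemma module_term_orderD:
  assumes "module_term_order m ord"
  shows "i < m \<Longrightarrow> \<not> ord (s, i) (s, i)"
    and "i < m \<Longrightarrow> j < m \<Longrightarrow> k < m \<Longrightarrow> ord (s, i) (t, j) \<Longrightarrow> ord (t, j) (u, k) \<Longrightarrow> ord (s, i) (u, k)"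
    and "i < m \<Longrightarrow> j < m \<Longrightarrow> (s, i) \<noteq> (t, j) \<Longrightarrow> ord (s, i) (t, j) \<or> ord (t, j) (s, i)"
    and "i < m \<Longrightarrow> j < m \<Longrightarrow> ord (s, i) (t, j) \<Longrightarrow> ord (s + u, i) (t + u, j)"
    and "i < m \<Longrightarrow> u \<noteq> 0 \<Longrightarrow> ord (t, i) (t + u, i)"
proof -
  note c = assms[unfolded module_term_order_def]
  show "i < m \<Longrightarrow> \<not> ord (s, i) (s, i)" using c[THEN conjunct1] by blast
  show "i < m \<Longrightarrow> j < m \<Longrightarrow> k < m \<Longrightarrow> ord (s, i) (t, j) \<Longrightarrow> ord (t, j) (u, k) \<Longrightarrow> ord (s, i) (u, k)"
    using c[THEN conjunct2, THEN conjunct1] by blast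
  show "i < m \<Longrightarrow> j < m \<Longrightarrow> (s, i) \<noteq> (t, j) \<Longrightarrow> ord (s, i) (t, j) \<or> ord (t, j) (s, i)"
    using c[THEN conjunct2, THEN conjunct2, THEN conjunct1] by blast
  show "i < m \<Longrightarrow> j < m \<Longrightarrow> ord (s, i) (t, j) \<Longrightarrow> ord (s + u, i) (t + u, j)"
    using c[THEN conjunct2, THEN conjunct2, THEN conjunct2, THEN conjunct1] by blast
  show "i < m \<Longrightarrow> u \<noteq> 0 \<Longrightarrow> ord (t, i) (t + u, i)"
    using c[THEN conjunct2, THEN conjunct2, THEN conjunct2, THEN conjunct2] by blast
qed

text \<open>Throughout, ordR is a term order on power products and ordM a term order on
  the module terms (t, i) with i < m. Terms with index \<ge> m never occur.\<close>
locale term_orders =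
  fixes ordR :: "('v::finite) pp \<Rightarrow> 'v pp \<Rightarrow> bool"
    and ordM :: "'v pp \<times> nat \<Rightarrow> 'v pp \<times> nat \<Rightarrow> bool"
    and m :: nat
  assumes ordR: "term_order ordR" and ordM: "module_term_order m ordM"
begin

lemma R_irrefl: "\<not> ordR s s"
  using term_orderD(1)[OF ordR] .

lemma R_trans: "ordR s t \<Longrightarrow> ordR t u \<Longrightarrow> ordR s u"
  using term_orderD(2)[OF ordR] .

lemma R_total: "s \<noteq> t \<Longrightarrow> ordR s t \<or> ordR t s"
  using term_orderD(3)[OF ordR] .

lemma R_mono: "ordR s t \<Longrightarrow> ordR (u + s) (u + t)"
  using term_orderD(4)[OF ordR] by (simp add: add.commute)

lemma M_irrefl: "snd x < m \<Longrightarrow> \<not> ordM x x"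
  using module_term_orderD(1)[OF ordM, of "snd x" "fst x"] by simp

lemma M_trans: "snd x < m \<Longrightarrow> snd y < m \<Longrightarrow> snd z < m \<Longrightarrow> ordM x y \<Longrightarrow> ordM y z \<Longrightarrow> ordM x z"
  using module_term_orderD(2)[OF ordM, where s="fst x" and i="snd x" and t="fst y" and j="snd y"
      and u="fst z" and k="snd z"] by simp

lemma M_total: "snd x < m \<Longrightarrow> snd y < m \<Longrightarrow> x \<noteq> y \<Longrightarrow> ordM x y \<or> ordM y x"
  using module_term_orderD(3)[OF ordM, where s="fst x" and i="snd x" and t="fst y" and j="snd y"]
  by (simp add: prod_eq_iff)

lemma M_mono: "snd x < m \<Longrightarrow> snd y < m \<Longrightarrow> ordM x y \<Longrightarrow> ordM (u + fst x, snd x) (u + fst y, snd y)"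
  using module_term_orderD(4)[OF ordM, where s="fst x" and i="snd x" and t="fst y" and j="snd y"
      and u=u] by (simp add: add.commute)

lemma M_strict: "i < m \<Longrightarrow> u \<noteq> 0 \<Longrightarrow> ordM (t, i) (t + u, i)"
  using module_term_orderD(5)[OF ordM] .

lemma M_cancel:
  assumes "snd x < m" "snd y < m" "ordM (u + fst x, snd x) (u + fst y, snd y)"
  shows "ordM x y"
proof (rule ccontr)
  assume n: "\<not> ordM x y"
  show False
  proof (cases "x = y")
    case True then show ?thesis using assms(3) M_irrefl[of "(u + fst x, snd x)"] assms(1) by simp
  next
    case False
    then have "ordM y x" using n M_total[OF assms(1,2)] by blast
    then have h: "ordM (u + fst y, snd y) (u + fst x, snd x)" using M_mono[OF assms(2,1)] by blast
    have "ordM (u + fst x, snd x) (u + fst x, snd x)"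
      by (rule M_trans[OF _ _ _ assms(3) h]) (use assms(1,2) in simp_all)
    then show ?thesis using M_irrefl[of "(u + fst x, snd x)"] assms(1) by simp
  qed
qed

lemma M_dvd_not_less:
  assumes "i < m" "pp_dvd s t"
  shows "\<not> ordM (t, i) (s, i)"
proof
  assume less: "ordM (t, i) (s, i)"
  show False
  proof (cases "t - s = 0")
    case True
    then have "t = s" using pp_dvd_imp_eq_add[OF assms(2)] by simp
    then show False using less M_irrefl[of "(s, i)"] assms(1) by simp
  next
    case False
    then have "ordM (s, i) (t, i)"
      using M_strict[OF assms(1) False, of s] pp_dvd_imp_eq_add[OF assms(2)] by simp
    then show False using less M_trans[of "(s, i)" "(t, i)" "(s, i)"] M_irrefl[of "(s, i)"] assms(1)
      by simp
  qed
qed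

lemma lpp_Some_iff: "lpp ordR p = Some t \<longleftrightarrow> is_max ordR (keys p) t"
proof (cases "p = 0")
  case True then show ?thesis by (simp add: lpp_def is_max_def)
next
  case False
  have props: "\<forall>x\<in>keys p. \<not> ordR x x"
     "\<forall>x y z. x\<in>keys p \<longrightarrow> y\<in>keys p \<longrightarrow> z\<in>keys p \<longrightarrow> ordR x y \<longrightarrow> ordR y z \<longrightarrow> ordR x z"
    using R_irrefl R_trans by (blast, blast)
  have "\<exists>x. is_max ordR (keys p) x"
  proof (rule is_max_exists)
    show "\<forall>x\<in>keys p. \<forall>y\<in>keys p. x \<noteq> y \<longrightarrow> ordR x y \<or> ordR y x" using R_total by blast
    show "\<forall>x y z. x\<in>keys p \<longrightarrow> y\<in>keys p \<longrightarrow> z\<in>keys p \<longrightarrow> ordR x y \<longrightarrow> ordR y z \<longrightarrow> ordR x z"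
      using R_trans by blast
  qed (use False in auto)
  then obtain x where x: "is_max ordR (keys p) x" by blast
  have e: "lpp ordR p = Some x" using the_is_max[OF x props] False by (simp add: lpp_def)
  show ?thesis
  proof
    assume "lpp ordR p = Some t" then show "is_max ordR (keys p) t" using e x by simp
  next
    assume "is_max ordR (keys p) t" then have "t = x" by (rule is_max_unique[OF _ x props])
    then show "lpp ordR p = Some t" using e by simp
  qed
qed

lemma lpp_None_iff: "lpp ordR p = None \<longleftrightarrow> p = 0"
proof -
  have "p \<noteq> 0 \<Longrightarrow> lpp ordR p \<noteq> None" by (simp add: lpp_def)
  then show ?thesis by (auto simp: lpp_def)
qed

lemma lpp_exists: "p \<noteq> 0 \<Longrightarrow> \<exists>t. lpp ordR p = Some t"
  using lpp_None_iff by (cases "lpp ordR p") auto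

lemma vterms_finite: "finite (vterms m u)"
proof -
  have "vterms m u \<subseteq> (\<Union>i<m. (\<lambda>t. (t, i)) ` keys (u i))" by (auto simp: vterms_def)
  then show ?thesis by (rule finite_subset) auto
qed

lemma vterms_snd: "x \<in> vterms m u \<Longrightarrow> snd x < m" by (auto simp: vterms_def)

lemma lpp_v_Some_iff: "lpp_v ordM m u = Some T \<longleftrightarrow> is_max ordM (vterms m u) T"
proof (cases "vterms m u = {}")
  case True then show ?thesis by (simp add: lpp_v_def is_max_def)
next
  case False
  have props: "\<forall>x\<in>vterms m u. \<not> ordM x x"
     "\<forall>x y z. x\<in>vterms m u \<longrightarrow> y\<in>vterms m u \<longrightarrow> z\<in>vterms m u \<longrightarrow> ordM x y \<longrightarrow> ordM y z \<longrightarrow> ordM x z"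
    using M_irrefl vterms_snd apply blast
    using M_trans vterms_snd by blast
  have "\<exists>x. is_max ordM (vterms m u) x"
  proof (rule is_max_exists)
    show "\<forall>x\<in>vterms m u. \<forall>y\<in>vterms m u. x \<noteq> y \<longrightarrow> ordM x y \<or> ordM y x"
      using M_total vterms_snd by blast
    show "\<forall>x y z. x\<in>vterms m u \<longrightarrow> y\<in>vterms m u \<longrightarrow> z\<in>vterms m u \<longrightarrow> ordM x y \<longrightarrow> ordM y z \<longrightarrow> ordM x z"
      using M_trans vterms_snd by blast
  qed (use False vterms_finite in auto)
  then obtain x where x: "is_max ordM (vterms m u) x" by blast
  have e: "lpp_v ordM m u = Some x" using the_is_max[OF x props] False by (simp add: lpp_v_def)
  show ?thesis
  proof
    assume "lpp_v ordM m u = Some T" then show "is_max ordM (vterms m u) T" using e x by simp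
  next
    assume "is_max ordM (vterms m u) T" then have "T = x" by (rule is_max_unique[OF _ x props])
    then show "lpp_v ordM m u = Some T" using e by simp
  qed
qed

lemma lpp_v_None_iff: "lpp_v ordM m u = None \<longleftrightarrow> vterms m u = {}"
  by (simp add: lpp_v_def)

lemma lpp_v_in: "lpp_v ordM m u = Some T \<Longrightarrow> T \<in> vterms m u"
  by (simp add: lpp_v_Some_iff is_max_def)

lemma lpp_v_snd: "lpp_v ordM m u = Some T \<Longrightarrow> snd T < m"
  by (rule vterms_snd[OF lpp_v_in])

lemma lpp_v_less_if_bounded:
  assumes "snd T < m" "\<forall>x\<in>vterms m w. ordM x T"
  shows "opt_less ordM (lpp_v ordM m w) (Some T)"
proof (cases "lpp_v ordM m w")
  case None then show ?thesis by (simp add: opt_less_def)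
next
  case (Some x)
  then have "x \<in> vterms m w" by (rule lpp_v_in)
  then show ?thesis using Some assms by (simp add: opt_less_def)
qed

lemma lpp_monom_mult:
  fixes c :: "'a::field"
  assumes "c \<noteq> 0"
  shows "lpp ordR (monom s c * g) = map_option ((+) s) (lpp ordR g)"
proof (cases "g = 0")
  case True then show ?thesis by (simp add: lpp_def)
next
  case False
  obtain t where t: "lpp ordR g = Some t" using lpp_exists False by blast
  have tm: "is_max ordR (keys g) t" using t by (simp add: lpp_Some_iff)
  have "is_max ordR (keys (monom s c * g)) (s + t)"
    unfolding is_max_def keys_monom_mult[OF assms]
  proof (intro conjI ballI impI)
    show "s + t \<in> (\<lambda>t. s + t) ` keys g" using tm by (simp add: is_max_def)
    fix y assume y: "y \<in> (\<lambda>t. s + t) ` keys g" "y \<noteq> s + t"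
    then obtain t' where t': "t' \<in> keys g" "y = s + t'" by blast
    then have "t' \<noteq> t" using y(2) by blast
    then have "ordR t' t" using tm t'(1) by (simp add: is_max_def)
    then show "ordR y (s + t)" using R_mono t'(2) by blast
  qed
  then have "lpp ordR (monom s c * g) = Some (s + t)" by (simp add: lpp_Some_iff)
  then show ?thesis using t by simp
qed

lemma lpp_diff_gt:
  fixes p :: "('v,'a::field) mpoly"
  assumes "lpp ordR p = Some a" "lpp ordR q = Some b" "ordR b a"
  shows "lpp ordR (p - q) = Some a"
proof -
  have pa: "is_max ordR (keys p) a" and qb: "is_max ordR (keys q) b" using assms by (simp_all add: lpp_Some_iff)
  have "a \<notin> keys q"
  proof
    assume "a \<in> keys q"
    then have "a = b \<or> ordR a b" using qb by (auto simp: is_max_def)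
    then show False using assms(3) R_irrefl[of a] R_trans[of a b a] by blast
  qed
  have "is_max ordR (keys (p - q)) a" unfolding is_max_def
  proof (intro conjI ballI impI)
    show "a \<in> keys (p - q)" using pa \<open>a \<notin> keys q\<close> by (simp add: is_max_def in_keys_iff lookup_minus)
    fix y assume y: "y \<in> keys (p - q)" "y \<noteq> a"
    then have "y \<in> keys p \<or> y \<in> keys q" by (auto simp: in_keys_iff lookup_minus)
    then show "ordR y a"
    proof
      assume "y \<in> keys p" then show ?thesis using pa y by (simp add: is_max_def)
    next
      assume "y \<in> keys q" then have "y = b \<or> ordR y b" using qb by (auto simp: is_max_def)
      then show ?thesis using assms(3) R_trans[of y b a] by blast
    qed
  qed
  then show ?thesis by (simp add: lpp_Some_iff)
qed

lemma lpp_diff_lt: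
  fixes p :: "('v,'a::field) mpoly"
  assumes "lpp ordR p = Some a" "lpp ordR q = Some b" "ordR a b"
  shows "lpp ordR (p - q) = Some b"
proof -
  have pa: "is_max ordR (keys p) a" and qb: "is_max ordR (keys q) b" using assms by (simp_all add: lpp_Some_iff)
  have "b \<notin> keys p"
  proof
    assume "b \<in> keys p"
    then have "b = a \<or> ordR b a" using pa by (auto simp: is_max_def)
    then show False using assms(3) R_irrefl[of a] R_trans[of a b a] by blast
  qed
  have "is_max ordR (keys (p - q)) b" unfolding is_max_def
  proof (intro conjI ballI impI)
    show "b \<in> keys (p - q)" using qb \<open>b \<notin> keys p\<close> by (simp add: is_max_def in_keys_iff lookup_minus)
    fix y assume y: "y \<in> keys (p - q)" "y \<noteq> b"
    then have "y \<in> keys p \<or> y \<in> keys q" by (auto simp: in_keys_iff lookup_minus)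
    then show "ordR y b"
    proof
      assume "y \<in> keys q" then show ?thesis using qb y by (simp add: is_max_def)
    next
      assume "y \<in> keys p" then have "y = a \<or> ordR y a" using pa by (auto simp: is_max_def)
      then show ?thesis using assms(3) R_trans[of y a b] by blast
    qed
  qed
  then show ?thesis by (simp add: lpp_Some_iff)
qed

lemma vterms_vscale:
  fixes c :: "'a::field"
  assumes "c \<noteq> 0"
  shows "vterms m (vscale (monom s c) u) = (\<lambda>(t, i). (s + t, i)) ` vterms m u"
  unfolding vterms_def vscale_def keys_monom_mult[OF assms] by auto

lemma lpp_v_vscale:
  fixes c :: "'a::field"
  assumes "c \<noteq> 0"
  shows "lpp_v ordM m (vscale (monom s c) u) = map_option (\<lambda>(t, i). (s + t, i)) (lpp_v ordM m u)"
proof (cases "lpp_v ordM m u")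
  case None
  then have "vterms m u = {}" by (simp add: lpp_v_None_iff)
  then have "vterms m (vscale (monom s c) u) = {}" unfolding vterms_vscale[OF assms] by simp
  then show ?thesis using None by (simp add: lpp_v_def)
next
  case (Some T)
  obtain t i where T: "T = (t, i)" by (cases T)
  have tm: "is_max ordM (vterms m u) (t, i)" using Some T by (simp add: lpp_v_Some_iff)
  have im: "i < m" using tm vterms_snd by (auto simp: is_max_def)
  have "is_max ordM (vterms m (vscale (monom s c) u)) (s + t, i)"
    unfolding is_max_def vterms_vscale[OF assms]
  proof (intro conjI ballI impI)
    show "(s + t, i) \<in> (\<lambda>(t, i). (s + t, i)) ` vterms m u" using tm by (force simp: is_max_def)
    fix y assume y: "y \<in> (\<lambda>(t, i). (s + t, i)) ` vterms m u" "y \<noteq> (s + t, i)"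
    then obtain t' j where t': "(t', j) \<in> vterms m u" "y = (s + t', j)" by auto
    then have "(t', j) \<noteq> (t, i)" using y(2) by blast
    then have o: "ordM (t', j) (t, i)" using tm t'(1) by (simp add: is_max_def)
    have "j < m" using t'(1) vterms_snd by fastforce
    from M_mono[of "(t',j)" "(t,i)" s] o \<open>j < m\<close> im show "ordM y (s + t, i)" using t'(2) by simp
  qed
  then have "lpp_v ordM m (vscale (monom s c) u) = Some (s + t, i)" by (simp add: lpp_v_Some_iff)
  then show ?thesis using Some T by simp
qed

lemma lpp_v_vscale_zero: "lpp_v ordM m (vscale (monom s 0) (u::('v,'a::field) vec)) = None"
  by (simp add: lpp_v_None_iff vterms_def vscale_def monom_def)

lemma vterms_vsub: "vterms m (vsub (u::('v,'a::field) vec) v) \<subseteq> vterms m u \<union> vterms m v"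
  by (auto simp: vterms_def vsub_def in_keys_iff lookup_minus)

lemma lpp_v_vsub_gt:
  fixes u :: "('v,'a::field) vec"
  assumes "lpp_v ordM m u = Some T" "opt_less ordM (lpp_v ordM m v) (Some T)"
  shows "lpp_v ordM m (vsub u v) = Some T"
proof -
  obtain t i where T: "T = (t, i)" by (cases T)
  have tm: "is_max ordM (vterms m u) T" using assms(1) by (simp add: lpp_v_Some_iff)
  have im: "i < m" using tm vterms_snd T by (auto simp: is_max_def)
  have vless: "ordM y T" if y: "y \<in> vterms m v" for y
  proof -
    obtain x where x: "lpp_v ordM m v = Some x" using y lpp_v_None_iff by (cases "lpp_v ordM m v") auto
    have xm: "is_max ordM (vterms m v) x" using x by (simp add: lpp_v_Some_iff)
    have xT: "ordM x T" using assms(2) x by (simp add: opt_less_def)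
    have "y = x \<or> ordM y x" using xm y by (auto simp: is_max_def)
    then show ?thesis
    proof
      assume "ordM y x"
      then show ?thesis using M_trans[of y x T] xT vterms_snd[OF y] lpp_v_snd[OF x] im T by simp
    qed (use xT in simp)
  qed
  have Tnv: "T \<notin> vterms m v" using vless M_irrefl[of T] im T by auto
  have "is_max ordM (vterms m (vsub u v)) T" unfolding is_max_def
  proof (intro conjI ballI impI)
    show "T \<in> vterms m (vsub u v)" using tm Tnv T
      by (auto simp: is_max_def vterms_def vsub_def in_keys_iff lookup_minus)
    fix y assume y: "y \<in> vterms m (vsub u v)" "y \<noteq> T"
    then have "y \<in> vterms m u \<or> y \<in> vterms m v" using vterms_vsub by blast
    then show "ordM y T"
    proof
      assume "y \<in> vterms m u" then show ?thesis using tm y by (simp add: is_max_def)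
    qed (rule vless)
  qed
  then show ?thesis by (simp add: lpp_v_Some_iff)
qed

lemma lpp_v_cancel:
  fixes u1 :: "('v,'a::field) vec"
  assumes "lpp_v ordM m u1 = Some (t, i)" "lpp_v ordM m u2 = Some (t, i)"
  shows "opt_less ordM (lpp_v ordM m (vsub u1 (vscale (monom 0 (lookup (u1 i) t / lookup (u2 i) t)) u2))) (Some (t, i))"
proof -
  define c where "c = lookup (u1 i) t / lookup (u2 i) t"
  have m1: "is_max ordM (vterms m u1) (t, i)" and m2: "is_max ordM (vterms m u2) (t, i)"
    using assms by (simp_all add: lpp_v_Some_iff)
  have im: "i < m" using m1 vterms_snd by (force simp: is_max_def)
  have l1: "lookup (u1 i) t \<noteq> 0" and l2: "lookup (u2 i) t \<noteq> 0" using m1 m2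
    by (auto simp: is_max_def vterms_def in_keys_iff)
  then have c0: "c \<noteq> 0" by (simp add: c_def)
  have vs: "vterms m (vscale (monom 0 c) u2) = vterms m u2"
    using vterms_vscale[OF c0, of 0 u2] by (auto simp: image_iff)
  define w where "w = vsub u1 (vscale (monom 0 c) u2)"
  have "lookup (w i) t = lookup (u1 i) t - c * lookup (u2 i) t"
    using lookup_single_mult_add[of 0 c "u2 i" t]
    by (simp add: w_def vsub_def vscale_def monom_def lookup_minus)
  then have wz: "lookup (w i) t = 0" using l2 by (simp add: c_def)
  have "\<forall>y\<in>vterms m w. ordM y (t, i)"
  proof
    fix y assume y: "y \<in> vterms m w"
    then have yn: "y \<noteq> (t, i)" using wz by (auto simp: vterms_def in_keys_iff)
    have "y \<in> vterms m u1 \<or> y \<in> vterms m u2" using y vterms_vsub[of u1 "vscale (monom 0 c) u2"] vs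
      unfolding w_def by blast
    then show "ordM y (t, i)" using m1 m2 yn by (auto simp: is_max_def)
  qed
  then have "opt_less ordM (lpp_v ordM m w) (Some (t, i))" by (intro lpp_v_less_if_bounded) (use im in simp_all)
  then show ?thesis by (simp add: w_def c_def)
qed

lemma Mmod_sig_exists:
  fixes u :: "('v,'a::field) vec"
  assumes "(u, p) \<in> Mmod m f" "p \<noteq> 0"
  shows "\<exists>T. lpp_v ordM m u = Some T"
proof (rule ccontr)
  assume "\<nexists>T. lpp_v ordM m u = Some T"
  then have "vterms m u = {}" by (cases "lpp_v ordM m u") (auto simp: lpp_v_None_iff)
  then have "keys (u i) = {}" if "i < m" for i
    using that by (auto simp: vterms_def simp del: keys_eq_empty)
  then have "\<forall>i<m. u i = 0" by simp
  then show False using assms by (simp add: Mmod_def)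
qed

lemma lpp_v_unitv:
  assumes "i < m"
  shows "lpp_v ordM m (unitv i :: ('v,'a::field) vec) = Some (0, i)"
proof -
  have "vterms m (unitv i :: ('v,'a) vec) = {(0, i)}" using assms by (auto simp: vterms_def unitv_def)
  then show ?thesis by (simp add: lpp_v_Some_iff is_max_def)
qed

definition term_less :: "(('v pp \<times> nat) \<times> ('v pp \<times> nat)) set" where
  "term_less = {(x, y). ordM x y \<and> snd x < m \<and> snd y < m}"

lemma trans_term_less: "trans term_less"
proof (rule transI)
  fix x y z assume "(x, y) \<in> term_less" "(y, z) \<in> term_less"
  then show "(x, z) \<in> term_less" using M_trans[of x y z] by (simp add: term_less_def)
qed

text \<open>If x is below y and both have the same index, then y does not divide x, so
  some variable occurs in x with a smaller exponent than in y.\<close>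
lemma term_less_same_index:
  assumes "(x, y) \<in> term_less" "snd x = snd y"
  shows "\<exists>v. lookup (fst x) v < lookup (fst y) v"
proof (rule ccontr)
  assume "\<not> ?thesis"
  then have "pp_dvd (fst y) (fst x)" by (auto simp: pp_dvd_def not_less)
  moreover have "snd x < m" using assms(1) by (simp add: term_less_def)
  ultimately have "\<not> ordM (fst x, snd x) (fst y, snd x)" using M_dvd_not_less by blast
  moreover have "ordM x y" using assms(1) by (simp add: term_less_def)
  ultimately show False using assms(2) by (cases x, cases y) simp
qed

text \<open>The module order is well-founded (a form of Dickson's lemma): it is transitive
  and contained in the union of finitely many well-founded relations, one for each of
  the finitely many variables (that exponent decreases) and two for the index.\<close>
lemma wf_term_less: "wf term_less"
proof (rule trans_disj_wf_implies_wf)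
  show "trans term_less" by (rule trans_term_less)
  obtain n and g :: "nat \<Rightarrow> 'v" where vars: "(UNIV :: 'v set) = g ` {i. i < n}"
    using finite_conv_nat_seg_image[of "UNIV :: 'v set"] by auto
  define T where "T i = (if i < n
      then {(x, y). snd x = snd y \<and> lookup (fst x) (g i) < lookup (fst y) (g i)}
      else if i = n then {(x :: 'v pp \<times> nat, y). snd x < snd y}
      else {(x, y). snd y < snd x \<and> snd x < m})" for i
  have "wf (T i)" for i
  proof -
    have "T i \<subseteq> (if i < n then inv_image less_than (\<lambda>x. lookup (fst x) (g i))
        else if i = n then inv_image less_than snd else measure (\<lambda>x. m - snd x))"
      by (auto simp: T_def)
    then show ?thesis by (rule wf_subset[rotated]) simp
  qed
  moreover have "term_less \<subseteq> (\<Union>i<Suc (Suc n). T i)"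
  proof
    fix p assume p: "p \<in> term_less"
    obtain x y where xy: "p = (x, y)" by (cases p)
    consider "snd x < snd y" | "snd y < snd x" | "snd x = snd y" by linarith
    then show "p \<in> (\<Union>i<Suc (Suc n). T i)"
    proof cases
      case 1
      then have "p \<in> T n" using xy by (simp add: T_def)
      then show ?thesis by (intro UN_I[of n]) simp_all
    next
      case 2
      then have "p \<in> T (Suc n)" using p xy by (simp add: T_def term_less_def)
      then show ?thesis by (intro UN_I[of "Suc n"]) simp_all
    next
      case 3
      obtain v where v: "lookup (fst x) v < lookup (fst y) v"
        using term_less_same_index[of x y] p xy 3 by blast
      obtain i where "i < n" "v = g i" using vars by blast
      then have "p \<in> T i" using xy 3 v by (simp add: T_def)
      then show ?thesis using \<open>i < n\<close> by (intro UN_I[of i]) simp_all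
    qed
  qed
  ultimately show "disj_wf term_less"
    unfolding disj_wf by (intro exI[of _ T] exI[of _ "Suc (Suc n)"]) simp
qed

section \<open>Leading power products attained below a signature\<close>

text \<open>Elements of M that are not reducible below their own signature are the ones that
  an S-Groebner basis has to account for directly.\<close>
definition reducible_below :: "(nat \<Rightarrow> ('v,'a::field) mpoly) \<Rightarrow> 'v pp \<times> nat \<Rightarrow> ('v,'a) mpoly \<Rightarrow> bool" where
  "reducible_below f T q \<longleftrightarrow> (\<exists>u' p'. (u', p') \<in> Mmod m f \<and> opt_less ordM (lpp_v ordM m u') (Some T) \<and>
       p' \<noteq> 0 \<and> lpp ordR p' = lpp ordR q)"

lemma not_reducible_below_zero: "\<not> reducible_below f T 0"
  by (auto simp: reducible_below_def lpp_None_iff lpp_def)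

text \<open>Otherwise the combination cancelling T (signature below T) would reduce one
  of them below T.\<close>
lemma lpp_eq_if_not_reducible_below:
  fixes u1 :: "('v,'a::field) vec"
  assumes "(u1, p1) \<in> Mmod m f" "(u2, p2) \<in> Mmod m f"
    "lpp_v ordM m u1 = Some T" "lpp_v ordM m u2 = Some T" "p1 \<noteq> 0"
    "\<not> reducible_below f T p1" "\<not> reducible_below f T p2"
  shows "p2 \<noteq> 0 \<and> lpp ordR p2 = lpp ordR p1"
proof -
  obtain t i where T: "T = (t, i)" by (cases T)
  define c where "c = lookup (u1 i) t / lookup (u2 i) t"
  define d where "d = p1 - monom 0 c * p2"
  define du where "du = vsub u1 (vscale (monom 0 c) u2)"
  have dM: "(du, d) \<in> Mmod m f" using Mmod_diff[OF assms(1,2)] by (simp add: d_def du_def)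
  have dl: "opt_less ordM (lpp_v ordM m du) (Some T)"
    using lpp_v_cancel[of u1 t i u2] assms(3,4) T by (simp add: du_def c_def)
  have "(t, i) \<in> vterms m u1" "(t, i) \<in> vterms m u2" using assms(3,4) T lpp_v_in by blast+
  then have c0: "c \<noteq> 0" by (auto simp: c_def vterms_def in_keys_iff)
  show ?thesis
  proof (cases "p2 = 0")
    case True
    then have "d = p1" by (simp add: d_def)
    then have "reducible_below f T p1" unfolding reducible_below_def using dM dl assms(5) by blast
    then show ?thesis using assms(6) by blast
  next
    case False
    obtain a where a: "lpp ordR p1 = Some a" using lpp_exists assms(5) by blast
    obtain b where b: "lpp ordR p2 = Some b" using lpp_exists False by blast
    have bq: "lpp ordR (monom 0 c * p2) = Some b" using lpp_monom_mult[OF c0, of 0 p2] b by simp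
    show ?thesis
    proof (cases "a = b")
      case True then show ?thesis using a b False by simp
    next
      case ne: False
      then consider "ordR b a" | "ordR a b" using R_total by blast
      then show ?thesis
      proof cases
        case 1
        then have "lpp ordR d = Some a" using lpp_diff_gt[OF a bq] by (simp add: d_def)
        then have "reducible_below f T p1" unfolding reducible_below_def using dM dl a
          by (intro exI[of _ du] exI[of _ d]) (auto simp: lpp_None_iff[symmetric])
        then show ?thesis using assms(6) by blast
      next
        case 2
        then have "lpp ordR d = Some b" using lpp_diff_lt[OF a bq] by (simp add: d_def)
        then have "reducible_below f T p2" unfolding reducible_below_def using dM dl b
          by (intro exI[of _ du] exI[of _ d]) (auto simp: lpp_None_iff[symmetric])
        then show ?thesis using assms(7) by blast
      qed
    qed
  qed
qed

text \<open>Every element of M with nonzero polynomial has a companion with the same leading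
  power product and signature at most its own that is not reducible below its
  signature: take one whose signature is minimal (by well-foundedness).\<close>
lemma exists_not_reducible_below:
  fixes u :: "('v,'a::field) vec"
  assumes "(u, p) \<in> Mmod m f" "p \<noteq> 0"
  obtains u' p' T' where "(u', p') \<in> Mmod m f" "lpp_v ordM m u' = Some T'"
    "opt_le ordM (Some T') (lpp_v ordM m u)" "p' \<noteq> 0" "lpp ordR p' = lpp ordR p"
    "\<not> reducible_below f T' p'"
proof -
  obtain T where T: "lpp_v ordM m u = Some T" using Mmod_sig_exists[OF assms] by blast
  define W where "W = {T'. (T' = T \<or> ordM T' T) \<and> (\<exists>u' p'. (u', p') \<in> Mmod m f \<and>
      lpp_v ordM m u' = Some T' \<and> p' \<noteq> 0 \<and> lpp ordR p' = lpp ordR p)}"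
  have "T \<in> W" using assms T by (auto simp: W_def)
  then obtain T' where T'W: "T' \<in> W" and T'min: "\<And>y. (y, T') \<in> term_less \<Longrightarrow> y \<notin> W"
    using wfE_min[OF wf_term_less] by metis
  then obtain u' p' where u': "(u', p') \<in> Mmod m f" "lpp_v ordM m u' = Some T'" "p' \<noteq> 0"
      "lpp ordR p' = lpp ordR p" and T'T: "T' = T \<or> ordM T' T"
    unfolding W_def by blast
  have Tm: "snd T < m" and T'm: "snd T' < m" using T u'(2) lpp_v_snd by blast+
  have "\<not> reducible_below f T' p'"
  proof
    assume "reducible_below f T' p'"
    then obtain u'' p'' where u'': "(u'', p'') \<in> Mmod m f" "opt_less ordM (lpp_v ordM m u'') (Some T')"
        "p'' \<noteq> 0" "lpp ordR p'' = lpp ordR p'"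
      unfolding reducible_below_def by blast
    obtain T'' where T'': "lpp_v ordM m u'' = Some T''" using Mmod_sig_exists[OF u''(1,3)] by blast
    then have T''T': "ordM T'' T'" using u''(2) by (simp add: opt_less_def)
    have T''m: "snd T'' < m" using T'' lpp_v_snd by blast
    have "ordM T'' T" using T'T T''T' M_trans[OF T''m T'm Tm] by blast
    then have "T'' \<in> W" using u'' T'' u'(4) by (auto simp: W_def)
    moreover have "(T'', T') \<in> term_less" using T''T' T''m T'm by (simp add: term_less_def)
    ultimately show False using T'min by blast
  qed
  moreover have "opt_le ordM (Some T') (lpp_v ordM m u)"
    using T'T T by (auto simp: opt_le_def opt_less_def)
  ultimately show thesis using that u' by blast
qed

end

section \<open>The criterion: closure under gen-rewritable critical pairs\<close>

text \<open>For a signature T, the rewriter of T is an lt-minimal element of G whose signature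
  divides T; the generator e_(snd T) shows that one exists.\<close>
locale rewrite_closed = term_orders ordR ordM m
  for ordR :: "('v::finite) pp \<Rightarrow> 'v pp \<Rightarrow> bool" and ordM :: "'v pp \<times> nat \<Rightarrow> 'v pp \<times> nat \<Rightarrow> bool"
    and m :: nat +
  fixes f :: "nat \<Rightarrow> ('v,'b::field) mpoly" and G :: "('v,'b) elem list" and lt :: "nat \<Rightarrow> nat \<Rightarrow> bool"
  assumes G_Mmod: "set G \<subseteq> Mmod m f"
    and G_units: "\<And>i. i < m \<Longrightarrow> i < length G \<and> G ! i = (unitv i, f i)"
    and lt_spo: "spo_on (length G) lt"
    and regular_pairs_rewritable: "\<And>a b. a < length G \<Longrightarrow> b < length G \<Longrightarrow>
       snd (G ! a) \<noteq> 0 \<Longrightarrow> snd (G ! b) \<noteq> 0 \<Longrightarrow> cp_regular ordR ordM m G a b \<Longrightarrow>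
       cp_rewritable ordR ordM m G lt a b"
begin

definition sig_dvd :: "'v pp \<times> nat \<Rightarrow> nat \<Rightarrow> bool" where
  "sig_dvd T k \<longleftrightarrow> k < length G \<and>
     (\<exists>t'. lpp_v ordM m (fst (G ! k)) = Some (t', snd T) \<and> pp_dvd t' (fst T))"

definition rewriter :: "'v pp \<times> nat \<Rightarrow> nat \<Rightarrow> bool" where
  "rewriter T k \<longleftrightarrow> sig_dvd T k \<and> \<not> (\<exists>k'. sig_dvd T k' \<and> lt k' k)"

definition cofactor :: "'v pp \<times> nat \<Rightarrow> nat \<Rightarrow> 'v pp" where
  "cofactor T k = fst T - fst (the (lpp_v ordM m (fst (G ! k))))"

lemma wf_lt: "wf {(x, y). lt x y}"
proof (rule finite_acyclic_wf)
  have "{(x, y). lt x y} \<subseteq> {..<length G} \<times> {..<length G}" using lt_spo by (auto simp: spo_on_def)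
  then show "finite {(x, y). lt x y}" by (rule finite_subset) simp
  have "trans {(x, y). lt x y}" using lt_spo unfolding spo_on_def trans_def by blast
  then show "acyclic {(x, y). lt x y}"
    unfolding acyclic_def trancl_id using lt_spo by (simp add: spo_on_def)
qed

lemma rewriter_exists:
  assumes "snd T < m"
  obtains k where "rewriter T k"
proof -
  have "pp_dvd 0 (fst T)" by (simp add: pp_dvd_def)
  then have "sig_dvd T (snd T)" unfolding sig_dvd_def
    using G_units[OF assms] lpp_v_unitv[OF assms] by auto
  then have "snd T \<in> {k. sig_dvd T k}" by simp
  from wfE_min[OF wf_lt this] obtain k where "k \<in> {k. sig_dvd T k}"
    "\<And>k'. (k', k) \<in> {(x, y). lt x y} \<Longrightarrow> k' \<notin> {k. sig_dvd T k}"
    by blast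
  then have "rewriter T k" by (auto simp: rewriter_def)
  then show thesis by (rule that)
qed

lemma sig_dvd_multiple:
  assumes "sig_dvd T k"
  shows "(vscale (monom (cofactor T k) 1) (fst (G ! k)), monom (cofactor T k) 1 * snd (G ! k)) \<in> Mmod m f"
    and "lpp_v ordM m (vscale (monom (cofactor T k) 1) (fst (G ! k))) = Some T"
proof -
  have "k < length G" using assms by (simp add: sig_dvd_def)
  then have "(fst (G ! k), snd (G ! k)) \<in> Mmod m f" using G_Mmod nth_mem by fastforce
  then show "(vscale (monom (cofactor T k) 1) (fst (G ! k)), monom (cofactor T k) 1 * snd (G ! k)) \<in> Mmod m f"
    by (rule Mmod_scale)
  obtain t' where t': "lpp_v ordM m (fst (G ! k)) = Some (t', snd T)" "pp_dvd t' (fst T)"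
    using assms by (auto simp: sig_dvd_def)
  have "cofactor T k + t' = fst T"
    using pp_dvd_imp_eq_add[OF t'(2)] t'(1) by (simp add: cofactor_def add.commute)
  then show "lpp_v ordM m (vscale (monom (cofactor T k) 1) (fst (G ! k))) = Some T"
    using lpp_v_vscale[of "1::'b" "cofactor T k" "fst (G ! k)"] t'(1) by simp
qed


lemma multiple_lpp_eq:
  fixes u :: "('v,'b) vec"
  assumes "(u, p) \<in> Mmod m f" "lpp_v ordM m u = Some T" "p \<noteq> 0" "\<not> reducible_below f T p"
    and "sig_dvd T k" "\<not> reducible_below f T (monom (cofactor T k) 1 * snd (G ! k))"
  shows "snd (G ! k) \<noteq> 0" and "lpp ordR (monom (cofactor T k) 1 * snd (G ! k)) = lpp ordR p"
proof -
  have "monom (cofactor T k) 1 * snd (G ! k) \<noteq> 0 \<and>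
      lpp ordR (monom (cofactor T k) 1 * snd (G ! k)) = lpp ordR p"
    using lpp_eq_if_not_reducible_below[OF assms(1) sig_dvd_multiple(1)[OF assms(5)]
        assms(2) sig_dvd_multiple(2)[OF assms(5)] assms(3,4,6)] .
  then show "snd (G ! k) \<noteq> 0" and "lpp ordR (monom (cofactor T k) 1 * snd (G ! k)) = lpp ordR p"
    by auto
qed

lemma multiples_factor_through_critical_pair:
  assumes "sig_dvd T k" "sig_dvd T' k'" "snd (G ! k) \<noteq> 0" "snd (G ! k') \<noteq> 0"
    and "lpp ordR (monom (cofactor T k) 1 * snd (G ! k)) =
         lpp ordR (monom (cofactor T' k') 1 * snd (G ! k'))"
  obtains r c c' where "cp_sig ordR ordM m G k k' = Some (c, snd T)"
    "cp_sig ordR ordM m G k' k = Some (c', snd T')" "fst T = r + c" "fst T' = r + c'"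
proof -
  define s where "s = cofactor T k"
  define s' where "s' = cofactor T' k'"
  obtain t where t: "lpp_v ordM m (fst (G ! k)) = Some (t, snd T)" "pp_dvd t (fst T)"
    using assms(1) by (auto simp: sig_dvd_def)
  obtain t' where t': "lpp_v ordM m (fst (G ! k')) = Some (t', snd T')" "pp_dvd t' (fst T')"
    using assms(2) by (auto simp: sig_dvd_def)
  have fT: "fst T = s + t" using pp_dvd_imp_eq_add[OF t(2)] t(1) by (simp add: s_def cofactor_def add.commute)
  have fT': "fst T' = s' + t'" using pp_dvd_imp_eq_add[OF t'(2)] t'(1) by (simp add: s'_def cofactor_def add.commute)
  obtain l where l: "lpp ordR (snd (G ! k)) = Some l" using lpp_exists assms(3) by blast
  obtain l' where l': "lpp ordR (snd (G ! k')) = Some l'" using lpp_exists assms(4) by blast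
  have "s + l = s' + l'"
    using assms(5) lpp_monom_mult[of "1::'b" s "snd (G ! k)"] lpp_monom_mult[of "1::'b" s' "snd (G ! k')"] l l'
    by (simp add: s_def s'_def)
  define L where "L = pp_lcm l l'"
  define r where "r = s + l - L"
  have s: "s = r + (L - l)" and s': "s' = r + (L - l')"
    using pp_lcm_split[OF \<open>s + l = s' + l'\<close>] by (simp_all add: r_def L_def)
  have "cp_mult ordR G k k' = L - l" and "cp_mult ordR G k' k = L - l'"
    using l l' pp_lcm_comm[of l' l] by (simp_all add: cp_mult_def L_def)
  then have "cp_sig ordR ordM m G k k' = Some ((L - l) + t, snd T)"
    and "cp_sig ordR ordM m G k' k = Some ((L - l') + t', snd T')"
    using lpp_v_vscale[of "1::'b" "L - l" "fst (G ! k)"] lpp_v_vscale[of "1::'b" "L - l'" "fst (G ! k')"] t'(1) t(1)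
    by (simp_all add: cp_sig_def)
  moreover have "fst T = r + ((L - l) + t)" and "fst T' = r + ((L - l') + t')"
    using fT fT' s s' by (simp_all add: add.assoc)
  ultimately show thesis by (rule that)
qed

text \<open>A side of a critical pair that is gen-rewritable yields an element below the
  rewriter of any multiple of that side.\<close>
lemma rewritable_side_not_rewriter:
  assumes "rewriter T k" "cp_sig ordR ordM m G k k' = Some (c, snd T)" "fst T = r + c"
    and "mult_rewritable ordM m G lt (cp_mult ordR G k k') k"
  shows False
proof -
  obtain j where j: "j < length G" "lt j k" "term_dvd (lpp_v ordM m (fst (G ! j))) (Some (c, snd T))"
    using assms(2,4) by (auto simp: mult_rewritable_def cp_sig_def)
  obtain d where d: "lpp_v ordM m (fst (G ! j)) = Some (d, snd T)" "pp_dvd d c"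
    using term_dvd_SomeD[OF j(3)] by blast
  have "pp_dvd c (fst T)" using assms(3) pp_dvd_plus[of c r] by simp
  then have "sig_dvd T j" using j(1) d pp_dvd_trans by (auto simp: sig_dvd_def)
  then show False using assms(1) j(2) by (auto simp: rewriter_def)
qed

text \<open>Their critical pair would be regular, hence
  gen-rewritable, contradicting the minimality of one of the two rewriters.\<close>
lemma rewriter_multiples_lpp_distinct:
  assumes "rewriter T k" "rewriter T' k'" "snd T < m" "snd T' < m" "ordM T' T"
    and "snd (G ! k) \<noteq> 0" "snd (G ! k') \<noteq> 0"
    and "lpp ordR (monom (cofactor T k) 1 * snd (G ! k)) =
         lpp ordR (monom (cofactor T' k') 1 * snd (G ! k'))"
  shows False
proof -
  have dvd: "sig_dvd T k" "sig_dvd T' k'" using assms(1,2) by (simp_all add: rewriter_def)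
  obtain r c c' where cs: "cp_sig ordR ordM m G k k' = Some (c, snd T)"
      "cp_sig ordR ordM m G k' k = Some (c', snd T')" and T: "fst T = r + c" "fst T' = r + c'"
    using multiples_factor_through_critical_pair[OF dvd assms(6-8)] .
  have "ordM (r + c', snd T') (r + c, snd T)" using assms(5) T by (metis prod.collapse)
  then have "ordM (c', snd T') (c, snd T)" using M_cancel[of "(c', snd T')" "(c, snd T)" r] assms(3,4) by simp
  then have "cp_regular ordR ordM m G k k'" by (simp add: cp_regular_def cs opt_less_def)
  moreover have "k < length G" "k' < length G" using dvd by (simp_all add: sig_dvd_def)
  ultimately have "cp_rewritable ordR ordM m G lt k k'"
    using regular_pairs_rewritable assms(6,7) by blast
  then show False
    unfolding cp_rewritable_def
    using rewritable_side_not_rewriter[OF assms(1) cs(1) T(1)]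
      rewritable_side_not_rewriter[OF assms(2) cs(2) T(2)] by blast
qed

text \<open>By well-founded
  induction on T: a reduction below T would, via a companion that is not reducible below
  its own signature T' < T and the rewriter of T', contradict the previous lemma.\<close>
lemma rewriter_not_reducible_below:
  "snd T < m \<Longrightarrow> rewriter T k \<Longrightarrow> \<not> reducible_below f T (monom (cofactor T k) 1 * snd (G ! k))"
proof (induction T arbitrary: k rule: wf_induct_rule[OF wf_term_less])
  case (1 T)
  have Tm: "snd T < m" and kT: "rewriter T k" using "1.prems" by simp_all
  show ?case
  proof
    assume red: "reducible_below f T (monom (cofactor T k) 1 * snd (G ! k))"
    then have g: "snd (G ! k) \<noteq> 0" using not_reducible_below_zero by (metis mult_zero_right)
    obtain u0 p0 where u0: "(u0, p0) \<in> Mmod m f" "opt_less ordM (lpp_v ordM m u0) (Some T)"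
        "p0 \<noteq> 0" "lpp ordR p0 = lpp ordR (monom (cofactor T k) 1 * snd (G ! k))"
      using red unfolding reducible_below_def by blast
    obtain u' p' T' where u': "(u', p') \<in> Mmod m f" "lpp_v ordM m u' = Some T'"
        "opt_le ordM (Some T') (lpp_v ordM m u0)" "p' \<noteq> 0" "lpp ordR p' = lpp ordR p0"
        "\<not> reducible_below f T' p'"
      using exists_not_reducible_below[OF u0(1,3)] by blast
    obtain T0 where T0: "lpp_v ordM m u0 = Some T0" using Mmod_sig_exists[OF u0(1,3)] by blast
    have T'm: "snd T' < m" and T0m: "snd T0 < m" using u'(2) T0 lpp_v_snd by blast+
    have "ordM T0 T" using u0(2) T0 by (simp add: opt_less_def)
    then have T'T: "ordM T' T"
      using u'(3) T0 M_trans[OF T'm T0m Tm] by (auto simp: opt_le_def opt_less_def)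
    obtain k' where k': "rewriter T' k'" using rewriter_exists[OF T'm] by blast
    have "(T', T) \<in> term_less" using T'T T'm Tm by (simp add: term_less_def)
    then have "\<not> reducible_below f T' (monom (cofactor T' k') 1 * snd (G ! k'))"
      using "1.IH" T'm k' by blast
    then have "snd (G ! k') \<noteq> 0" "lpp ordR (monom (cofactor T' k') 1 * snd (G ! k')) = lpp ordR p'"
      using multiple_lpp_eq[OF u'(1,2,4,6)] k' by (auto simp: rewriter_def)
    then show False
      using rewriter_multiples_lpp_distinct[OF kT k' Tm T'm T'T g] u'(5) u0(4)
      by simp
  qed
qed

text \<open>For (u, p) in M with p nonzero, pass to a companion (u', p') that
  is not reducible below its signature T' \<le> lpp u; the multiple of the rewriter of T'
  has signature T' and, by the previous lemmas, the leading power product of p.\<close>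
theorem SGB_criterion: "is_SGB ordR ordM m f (set G)"
  unfolding is_SGB_def
proof (intro conjI ballI)
  show "finite (set G)" by simp
  show "set G \<subseteq> Mmod m f" by (rule G_Mmod)
next
  fix x assume "x \<in> Mmod m f"
  then obtain u p where x: "x = (u, p)" and uM: "(u, p) \<in> Mmod m f" by (cases x) auto
  show "case x of (u, p) \<Rightarrow> p \<noteq> 0 \<longrightarrow> (\<exists>(v, g)\<in>set G. g \<noteq> 0 \<and>
      pp_dvd (the (lpp ordR g)) (the (lpp ordR p)) \<and>
      opt_le ordM (lpp_v ordM m (vscale (monom (the (lpp ordR p) - the (lpp ordR g)) 1) v)) (lpp_v ordM m u))"
    unfolding x prod.case
  proof
    assume "p \<noteq> 0"
    then obtain u' p' T' where u': "(u', p') \<in> Mmod m f" "lpp_v ordM m u' = Some T'"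
        "opt_le ordM (Some T') (lpp_v ordM m u)" "p' \<noteq> 0" "lpp ordR p' = lpp ordR p"
        "\<not> reducible_below f T' p'"
      using exists_not_reducible_below[OF uM] by blast
    have T'm: "snd T' < m" using u'(2) lpp_v_snd by blast
    obtain k where k: "rewriter T' k" using rewriter_exists[OF T'm] by blast
    then have dvd: "sig_dvd T' k" by (simp add: rewriter_def)
    define s where "s = cofactor T' k"
    have g: "snd (G ! k) \<noteq> 0" and lpp_eq: "lpp ordR (monom s 1 * snd (G ! k)) = lpp ordR p"
      using multiple_lpp_eq[OF u'(1,2,4,6) dvd] rewriter_not_reducible_below[OF T'm k] u'(5)
      by (simp_all add: s_def)
    obtain l where l: "lpp ordR (snd (G ! k)) = Some l" using lpp_exists g by blast
    have lp: "lpp ordR p = Some (s + l)" using lpp_eq lpp_monom_mult[of "1::'b" s "snd (G ! k)"] l by simp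
    have "G ! k \<in> set G" using dvd by (simp add: sig_dvd_def)
    moreover have "lpp_v ordM m (vscale (monom s 1) (fst (G ! k))) = Some T'"
      using sig_dvd_multiple(2)[OF dvd] by (simp add: s_def)
    ultimately show "\<exists>(v, g)\<in>set G. g \<noteq> 0 \<and> pp_dvd (the (lpp ordR g)) (the (lpp ordR p)) \<and>
      opt_le ordM (lpp_v ordM m (vscale (monom (the (lpp ordR p) - the (lpp ordR g)) 1) v)) (lpp_v ordM m u)"
      using g l lp u'(3) pp_dvd_plus[of l s]
      by (intro bexI[of _ "G ! k"]) (auto simp: case_prod_beta)
  qed
qed

end

section \<open>Single steps of the algorithm\<close>

lemma critical_pair_append:
  assumes "G' = G @ zs" "a < length G" "b < length G"
  shows "cp_mult ordR G' a b = cp_mult ordR G a b"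
    and "cp_sig ordR ordM m G' a b = cp_sig ordR ordM m G a b"
    and "cp_regular ordR ordM m G' a b = cp_regular ordR ordM m G a b"
    and "orient ordR ordM m G' a b = orient ordR ordM m G a b"
    and "G' ! a = G ! a"
  using assms by (simp_all add: cp_mult_def cp_sig_def cp_regular_def orient_def nth_append)

lemma mult_rewritable_append:
  assumes "G' = G @ zs" "a < length G" "\<forall>x y. x < length G \<longrightarrow> y < length G \<longrightarrow> lt' x y = lt x y"
    and "mult_rewritable ordM m G lt t a"
  shows "mult_rewritable ordM m G' lt' t a"
  using assms unfolding mult_rewritable_def by (fastforce simp: nth_append)

lemma G_init_length: "m \<le> length (G_init m f)"
  by (simp add: G_init_def)

lemma G_init_nth: "i < m \<Longrightarrow> G_init m f ! i = (unitv i, f i)"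
  by (simp add: G_init_def nth_append)

lemma G_init_syzygy:
  fixes f :: "nat \<Rightarrow> ('v,'a::field) mpoly"
  assumes "m \<le> i" "i < length (G_init m f)"
  shows "snd (G_init m f ! i) = 0"
proof -
  define Z :: "('v, 'a) elem list" where "Z = concat (map (\<lambda>i. map (\<lambda>j.
      (vsub (vscale (f j) (unitv i)) (vscale (f i) (unitv j)), 0)) [Suc i..<m]) [0..<m])"
  have "G_init m f = map (\<lambda>i. (unitv i, f i)) [0..<m] @ Z" by (simp add: G_init_def Z_def)
  then have "G_init m f ! i = Z ! (i - m)" and "i - m < length Z" using assms by (simp_all add: nth_append)
  then have "G_init m f ! i \<in> set Z" by simp
  then show ?thesis by (auto simp: Z_def)
qed

lemma G_init_Mmod: "set (G_init m f) \<subseteq> Mmod m (f :: nat \<Rightarrow> ('v,'a::field) mpoly)"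
proof
  fix x assume "x \<in> set (G_init m f)"
  then consider i where "i < m" "x = (unitv i, f i)"
    | i j where "i < m" "Suc i \<le> j" "j < m" "x = (vsub (vscale (f j) (unitv i)) (vscale (f i) (unitv j)), 0)"
    by (auto simp: G_init_def)
  then show "x \<in> Mmod m f"
  proof cases
    case 1 then show ?thesis using Mmod_unit by blast
  next
    case 2 then show ?thesis using Mmod_syzygy[OF Mmod_unit[of j m f], of i] by simp
  qed
qed

context term_orders
begin

lemma reduction_preserves:
  fixes G :: "('v,'a::field) elem list"
  assumes "(red1 ordR ordM m G)\<^sup>*\<^sup>* x y" "set G \<subseteq> Mmod m f" "x \<in> Mmod m f"
  shows "y \<in> Mmod m f \<and> lpp_v ordM m (fst y) = lpp_v ordM m (fst x)"
  using assms(1)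
proof (induction rule: rtranclp_induct)
  case base then show ?case using assms(3) by simp
next
  case (step y z)
  obtain k where k: "k < length G" and
    r: "let (v, g) = G ! k; (u, f) = y;
            c = lc ordR f / lc ordR g; t = the (lpp ordR f) - the (lpp ordR g)
        in g \<noteq> 0 \<and> f \<noteq> 0 \<and> pp_dvd (the (lpp ordR g)) (the (lpp ordR f)) \<and>
           lpp_v ordM m (vsub u (vscale (monom t c) v)) = lpp_v ordM m u \<and>
           z = (vsub u (vscale (monom t c) v), f - monom t c * g)"
    using step.hyps(2) unfolding red1_def by blast
  obtain v g where vg: "G ! k = (v, g)" by (cases "G ! k")
  obtain u p where up: "y = (u, p)" by (cases y)
  define c where "c = lc ordR p / lc ordR g"
  define t where "t = the (lpp ordR p) - the (lpp ordR g)"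
  have z: "z = (vsub u (vscale (monom t c) v), p - monom t c * g)"
    and zl: "lpp_v ordM m (vsub u (vscale (monom t c) v)) = lpp_v ordM m u"
    using r vg up by (simp_all add: Let_def c_def t_def)
  have "G ! k \<in> set G" using k by simp
  then have "(v, g) \<in> Mmod m f" using vg assms(2) by auto
  moreover have "(u, p) \<in> Mmod m f" using step.IH up by simp
  ultimately have "z \<in> Mmod m f" unfolding z by (intro Mmod_diff)
  then show ?case using step.IH up z zl by simp
qed

lemma spoly_Mmod:
  fixes G :: "('v,'a::field) elem list"
  assumes "set G \<subseteq> Mmod m f" "a < length G" "b < length G"
  shows "spoly ordR G a b \<in> Mmod m f"
proof -
  have ma: "(fst (G!a), snd (G!a)) \<in> Mmod m f" and mb: "(fst (G!b), snd (G!b)) \<in> Mmod m f"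
    using assms nth_mem by fastforce+
  show ?thesis unfolding spoly_def Let_def
    using Mmod_diff[OF Mmod_scale[OF ma] mb] by simp
qed

lemma spoly_sig:
  fixes G :: "('v,'a::field) elem list"
  assumes "cp_regular ordR ordM m G a b"
  shows "lpp_v ordM m (fst (spoly ordR G a b)) = cp_sig ordR ordM m G a b"
proof -
  obtain T where T: "cp_sig ordR ordM m G a b = Some T"
    using assms by (cases "cp_sig ordR ordM m G a b") (auto simp: cp_regular_def opt_less_def split: option.splits)
  define c where "c = lc ordR (snd (G ! a)) / lc ordR (snd (G ! b))"
  define V where "V = vscale (monom (cp_mult ordR G b a) c) (fst (G ! b))"
  have "opt_less ordM (lpp_v ordM m V) (Some T)"
  proof (cases "c = 0")
    case True then show ?thesis by (simp add: V_def lpp_v_vscale_zero opt_less_def)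
  next
    case False
    have "lpp_v ordM m V = cp_sig ordR ordM m G b a"
      using lpp_v_vscale[OF False] lpp_v_vscale[of "1::'a"] by (simp add: V_def cp_sig_def)
    then show ?thesis using assms T by (simp add: cp_regular_def)
  qed
  moreover have "lpp_v ordM m (vscale (monom (cp_mult ordR G a b) 1) (fst (G ! a))) = Some T"
    using T by (simp add: cp_sig_def)
  ultimately have "lpp_v ordM m (vsub (vscale (monom (cp_mult ordR G a b) 1) (fst (G ! a))) V) = Some T"
    by (rule lpp_v_vsub_gt[rotated])
  then show ?thesis using T by (simp add: spoly_def Let_def V_def c_def)
qed

lemma orient_regular:
  fixes G :: "('v,'a::field) elem list"
  assumes "cp_regular ordR ordM m G a b"
  shows "orient ordR ordM m G a b = (a, b)" and "orient ordR ordM m G b a = (a, b)"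
proof -
  obtain T where T: "cp_sig ordR ordM m G a b = Some T"
    using assms by (cases "cp_sig ordR ordM m G a b") (auto simp: cp_regular_def opt_less_def split: option.splits)
  have Tm: "snd T < m" using T lpp_v_snd by (simp add: cp_sig_def)
  have ol: "opt_less ordM (cp_sig ordR ordM m G b a) (Some T)" using assms T by (simp add: cp_regular_def)
  show "orient ordR ordM m G a b = (a, b)" using ol T by (simp add: orient_def opt_le_def)
  have "\<not> opt_le ordM (Some T) (cp_sig ordR ordM m G b a)"
  proof (cases "cp_sig ordR ordM m G b a")
    case None then show ?thesis by (simp add: opt_le_def opt_less_def)
  next
    case (Some y)
    have ym: "snd y < m" using Some lpp_v_snd by (simp add: cp_sig_def)
    have yT: "ordM y T" using ol Some by (simp add: opt_less_def)
    have "y \<noteq> T" using yT M_irrefl[OF Tm] by blast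
    moreover have "\<not> ordM T y" using yT M_trans[OF Tm ym Tm] M_irrefl[OF Tm] by blast
    ultimately show ?thesis using Some by (auto simp: opt_le_def opt_less_def)
  qed
  then show "orient ordR ordM m G b a = (a, b)" using T by (simp add: orient_def)
qed

lemma regular_pair_distinct:
  fixes G :: "('v,'a::field) elem list"
  assumes "cp_regular ordR ordM m G a b" shows "a \<noteq> b"
proof
  assume "a = b"
  then have r: "opt_less ordM (cp_sig ordR ordM m G a a) (cp_sig ordR ordM m G a a)"
    using assms by (simp add: cp_regular_def)
  show False
  proof (cases "cp_sig ordR ordM m G a a")
    case None then show ?thesis using r by (simp add: opt_less_def)
  next
    case (Some T)
    then have "snd T < m" using lpp_v_snd by (simp add: cp_sig_def)
    then show ?thesis using r Some M_irrefl by (simp add: opt_less_def)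
  qed
qed

lemma gbgc_stepE:
  fixes s s' :: "('v,'a::field) gstate"
  assumes "gbgc_step ordR ordM m f s (a, b) s'"
  obtains (skip) "\<not> (cp_regular ordR ordM m (gG s) a b \<and> \<not> cp_rewritable ordR ordM m (gG s) (glt s) a b)"
      "gG s' = gG s" "gCP s' = gCP s - {(a, b)}" "glt s' = glt s"
  | (reduce) w h where "cp_regular ordR ordM m (gG s) a b" "\<not> cp_rewritable ordR ordM m (gG s) (glt s) a b"
      "(red1 ordR ordM m (gG s))\<^sup>*\<^sup>* (spoly ordR (gG s) a b) (w, h)"
      "gG s' = gG s @ [(w, h)] @
         (if h \<noteq> 0 then map (\<lambda>i. (vsub (vscale h (unitv i)) (vscale (f i) w), 0)) [0..<m] else [])"
      "gCP s' = (gCP s - {(a, b)}) \<union>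
         (if h \<noteq> 0 then {orient ordR ordM m (gG s') (length (gG s)) j | j.
                            j < length (gG s) \<and> snd (gG s ! j) \<noteq> 0} else {})"
      "spo_on (length (gG s')) (glt s')"
      "\<forall>x y. x < length (gG s) \<longrightarrow> y < length (gG s) \<longrightarrow> glt s' x y = glt s x y"
proof (cases "cp_regular ordR ordM m (gG s) a b \<and> \<not> cp_rewritable ordR ordM m (gG s) (glt s) a b")
  case True
  with assms obtain w h where
    "(red1 ordR ordM m (gG s))\<^sup>*\<^sup>* (spoly ordR (gG s) a b) (w, h)"
    "gG s' = gG s @ [(w, h)] @
       (if h \<noteq> 0 then map (\<lambda>i. (vsub (vscale h (unitv i)) (vscale (f i) w), 0)) [0..<m] else [])"
    "gCP s' = (gCP s - {(a, b)}) \<union>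
       (if h \<noteq> 0 then {orient ordR ordM m (gG s') (length (gG s)) j | j.
                          j < length (gG s) \<and> snd (gG s ! j) \<noteq> 0} else {})"
    "spo_on (length (gG s')) (glt s')"
    "\<forall>x y. x < length (gG s) \<longrightarrow> y < length (gG s) \<longrightarrow> glt s' x y = glt s x y"
    unfolding gbgc_step_def Let_def prod.case if_P[OF True] by blast
  with True show thesis by (intro reduce) simp_all
next
  case False
  then have "s' = (gG s, gCP s - {(a, b)}, glt s)"
    using assms unfolding gbgc_step_def Let_def prod.case by simp
  with False show thesis by (intro skip) (simp_all add: gG_def gCP_def glt_def)
qed

lemma gbgc_step_selected: "gbgc_step ordR ordM m f s ab s' \<Longrightarrow> ab \<in> gCP s"
  by (simp add: gbgc_step_def case_prod_beta Let_def)

lemma gbgc_step_extends: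
  fixes s s' :: "('v,'a::field) gstate"
  assumes step: "gbgc_step ordR ordM m f s (a, b) s'"
    and inv: "set (gG s) \<subseteq> Mmod m f" "spo_on (length (gG s)) (glt s)"
      "\<forall>p\<in>gCP s. fst p < length (gG s) \<and> snd p < length (gG s)"
  shows "(\<exists>zs. gG s' = gG s @ zs) \<and>
    (\<forall>x y. x < length (gG s) \<longrightarrow> y < length (gG s) \<longrightarrow> glt s' x y = glt s x y) \<and>
    gCP s - {(a, b)} \<subseteq> gCP s' \<and>
    set (gG s') \<subseteq> Mmod m f \<and> spo_on (length (gG s')) (glt s') \<and>
    (\<forall>p\<in>gCP s'. fst p < length (gG s') \<and> snd p < length (gG s'))"
  using step
proof (cases rule: gbgc_stepE)
  case skip
  then show ?thesis using inv by auto
next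
  case (reduce w h)
  have ab: "a < length (gG s)" "b < length (gG s)" using inv(3) gbgc_step_selected[OF step] by auto
  have whM: "(w, h) \<in> Mmod m f"
    using reduction_preserves[OF reduce(3) inv(1) spoly_Mmod[OF inv(1) ab]] by simp
  have "set (gG s') \<subseteq> Mmod m f" using inv(1) whM Mmod_syzygy[OF whM] reduce(4) by auto
  moreover have "length (gG s) < length (gG s')" using reduce(4) by simp
  then have "\<forall>p\<in>gCP s'. fst p < length (gG s') \<and> snd p < length (gG s')"
    using inv(3) reduce(5) by (auto simp: orient_def split: if_splits)
  moreover have "gCP s - {(a, b)} \<subseteq> gCP s'" using reduce(5) by blast
  ultimately show ?thesis using reduce(4,6,7) by blast
qed

lemma gbgc_step_new_elements:
  fixes s s' :: "('v,'a::field) gstate"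
  assumes step: "gbgc_step ordR ordM m f s (a, b) s'"
    and "length (gG s) \<le> i" "i < length (gG s')" "snd (gG s' ! i) \<noteq> 0"
  shows "i = length (gG s) \<and>
    (\<forall>j<length (gG s). snd (gG s ! j) \<noteq> 0 \<longrightarrow> orient ordR ordM m (gG s') i j \<in> gCP s')"
  using step
proof (cases rule: gbgc_stepE)
  case skip
  then show ?thesis using assms(2,3) by simp
next
  case (reduce w h)
  have i: "i = length (gG s)"
  proof (rule ccontr)
    assume "i \<noteq> length (gG s)"
    then have "snd (gG s' ! i) = 0" using reduce(4) assms(2,3) by (auto simp: nth_append split: if_splits)
    then show False using assms(4) by simp
  qed
  then have "h \<noteq> 0" using reduce(4) assms(4) by (simp add: nth_append)
  then show ?thesis using reduce(5) i by auto
qed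

lemma gbgc_step_processed:
  fixes s s' :: "('v,'a::field) gstate"
  assumes step: "gbgc_step ordR ordM m f s (a, b) s'"
    and "cp_regular ordR ordM m (gG s) a b" "\<not> cp_rewritable ordR ordM m (gG s) (glt s) a b"
    and inv: "set (gG s) \<subseteq> Mmod m f" "a < length (gG s)" "b < length (gG s)"
  shows "length (gG s) < length (gG s') \<and>
    lpp_v ordM m (fst (gG s' ! length (gG s))) = cp_sig ordR ordM m (gG s) a b"
  using step
proof (cases rule: gbgc_stepE)
  case skip
  then show ?thesis using assms(2,3) by simp
next
  case (reduce w h)
  have "lpp_v ordM m w = lpp_v ordM m (fst (spoly ordR (gG s) a b))"
    using reduction_preserves[OF reduce(3) inv(1) spoly_Mmod[OF inv]] by simp
  then show ?thesis using reduce(4) spoly_sig[OF assms(2)] by (simp add: nth_append)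
qed

end

section \<open>Terminating runs of the algorithm\<close>

locale terminated_run = term_orders ordR ordM m
  for ordR :: "('v::finite) pp \<Rightarrow> 'v pp \<Rightarrow> bool" and ordM :: "'v pp \<times> nat \<Rightarrow> 'v pp \<times> nat \<Rightarrow> bool"
    and m :: nat +
  fixes f :: "nat \<Rightarrow> ('v,'b::field) mpoly" and ss :: "('v,'b) gstate list" and cps :: "(nat \<times> nat) list"
  assumes run: "gbgc_run ordR ordM m f ss cps" and admissible: "gbgc_admissible ordR ordM m ss cps"
begin

abbreviation "N \<equiv> length cps"
abbreviation "Gs k \<equiv> gG (ss ! k)"
abbreviation "CPs k \<equiv> gCP (ss ! k)"
abbreviation "Ls k \<equiv> glt (ss ! k)"

lemma run_step: "k < N \<Longrightarrow> gbgc_step ordR ordM m f (ss ! k) (cps ! k) (ss ! Suc k)"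
  using run by (simp add: gbgc_run_def)

lemma last_state: "last ss = ss ! N"
proof -
  have "length ss = Suc N" using run by (simp add: gbgc_run_def)
  moreover from this have "ss \<noteq> []" by auto
  ultimately show ?thesis by (simp add: last_conv_nth)
qed

lemma no_pairs_left: "CPs N = {}"
  using run last_state by (simp add: gbgc_run_def)

lemma initial_state: "Gs 0 = G_init m f" "CPs 0 = CP_init ordR ordM m f" "spo_on (length (Gs 0)) (Ls 0)"
  using run by (simp_all add: gbgc_run_def gbgc_init_def)

lemma run_invariant:
  "k \<le> N \<Longrightarrow> set (Gs k) \<subseteq> Mmod m f \<and> spo_on (length (Gs k)) (Ls k) \<and>
    (\<forall>p\<in>CPs k. fst p < length (Gs k) \<and> snd p < length (Gs k))"
proof (induction k)
  case 0
  have "\<forall>p\<in>CPs 0. fst p < length (Gs 0) \<and> snd p < length (Gs 0)"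
    using initial_state G_init_length[of m f] by (auto simp: CP_init_def orient_def)
  then show ?case using initial_state G_init_Mmod[of m f] by simp
next
  case (Suc k)
  obtain a b where "cps ! k = (a, b)" by (cases "cps ! k")
  then show ?case
    using gbgc_step_extends[of f "ss ! k" a b "ss ! Suc k"] run_step[of k] Suc by simp
qed

lemma run_extends:
  assumes "k \<le> k'" "k' \<le> N"
  shows "(\<exists>zs. Gs k' = Gs k @ zs) \<and>
    (\<forall>x y. x < length (Gs k) \<longrightarrow> y < length (Gs k) \<longrightarrow> Ls k' x y = Ls k x y)"
  using assms
proof (induction k' rule: dec_induct)
  case base then show ?case by simp
next
  case (step n)
  obtain a b where "cps ! n = (a, b)" by (cases "cps ! n")
  then have "(\<exists>zs. Gs (Suc n) = Gs n @ zs) \<and>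
      (\<forall>x y. x < length (Gs n) \<longrightarrow> y < length (Gs n) \<longrightarrow> Ls (Suc n) x y = Ls n x y)"
    using gbgc_step_extends[of f "ss ! n" a b "ss ! Suc n"] run_step[of n] run_invariant[of n] step
    by simp
  then show ?case using step by (auto simp: nth_append)
qed

definition covered :: "nat \<Rightarrow> nat \<Rightarrow> nat \<Rightarrow> bool" where
  "covered k a b \<longleftrightarrow> (\<exists>p\<in>{orient ordR ordM m (Gs k) a b, orient ordR ordM m (Gs k) b a}.
     p \<in> CPs k \<or> (\<exists>j<k. cps ! j = p))"

lemma initial_pairs_covered:
  assumes "a < b" "b < length (Gs 0)" "snd (Gs 0 ! a) \<noteq> 0" "snd (Gs 0 ! b) \<noteq> 0"
  shows "covered 0 a b"
proof -
  have "b < m"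
  proof (rule ccontr)
    assume "\<not> b < m"
    then have "snd (Gs 0 ! b) = 0" using assms(2) G_init_syzygy[of m b f] initial_state(1) by simp
    then show False using assms(4) by simp
  qed
  then have "Gs 0 ! a = (unitv a, f a)" "Gs 0 ! b = (unitv b, f b)"
    using G_init_nth[of a m f] G_init_nth[of b m f] initial_state(1) assms(1) by simp_all
  then have "f a \<noteq> 0" "f b \<noteq> 0" using assms(3,4) by simp_all
  then have "orient ordR ordM m (G_init m f) a b \<in> CP_init ordR ordM m f"
    using assms(1) \<open>b < m\<close> unfolding CP_init_def by (intro CollectI exI[of _ a] exI[of _ b]) simp
  then have "orient ordR ordM m (Gs 0) a b \<in> CPs 0" using initial_state(1,2) by simp
  then show ?thesis by (simp add: covered_def)
qed

text \<open>Every pair of elements with nonzero polynomials is covered at every stage: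
  pending pairs are either selected or remain, and a new element with nonzero
  polynomial comes with all its pairs.\<close>
lemma pairs_covered:
  "k \<le> N \<Longrightarrow> a < b \<Longrightarrow> b < length (Gs k) \<Longrightarrow> snd (Gs k ! a) \<noteq> 0 \<Longrightarrow> snd (Gs k ! b) \<noteq> 0 \<Longrightarrow>
    covered k a b"
proof (induction k arbitrary: a b)
  case 0
  then show ?case using initial_pairs_covered by blast
next
  case (Suc k)
  obtain zs where zs: "Gs (Suc k) = Gs k @ zs" using run_extends[of k "Suc k"] Suc.prems(1) by auto
  obtain c d where cd: "cps ! k = (c, d)" by (cases "cps ! k")
  have step: "gbgc_step ordR ordM m f (ss ! k) (c, d) (ss ! Suc k)" using run_step[of k] Suc.prems(1) cd by simp
  show ?case
  proof (cases "b < length (Gs k)")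
    case True
    have ab: "a < length (Gs k)" using True Suc.prems(2) by simp
    then have "covered k a b" using Suc zs True by (simp add: nth_append)
    then obtain p where p: "p \<in> {orient ordR ordM m (Gs k) a b, orient ordR ordM m (Gs k) b a}"
        "p \<in> CPs k \<or> (\<exists>j<k. cps ! j = p)"
      unfolding covered_def by blast
    have "p \<in> CPs (Suc k) \<or> (\<exists>j<Suc k. cps ! j = p)"
    proof (cases "p = cps ! k")
      case False
      then show ?thesis using p(2) gbgc_step_extends[OF step] run_invariant[of k] Suc.prems(1) cd
        by (auto dest: less_SucI)
    qed auto
    moreover have "orient ordR ordM m (Gs (Suc k)) a b = orient ordR ordM m (Gs k) a b"
      "orient ordR ordM m (Gs (Suc k)) b a = orient ordR ordM m (Gs k) b a"
      using critical_pair_append(4)[OF zs] ab True by simp_all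
    ultimately show ?thesis using p(1) unfolding covered_def by auto
  next
    case False
    then have "b = length (Gs k)" and
      new: "\<forall>j<length (Gs k). snd (Gs k ! j) \<noteq> 0 \<longrightarrow> orient ordR ordM m (Gs (Suc k)) b j \<in> CPs (Suc k)"
      using gbgc_step_new_elements[OF step, of b] Suc.prems(3,5) by auto
    moreover have "snd (Gs k ! a) \<noteq> 0" using Suc.prems(2,4) zs \<open>b = length (Gs k)\<close> by (simp add: nth_append)
    ultimately show ?thesis using Suc.prems(2) unfolding covered_def by auto
  qed
qed

lemma regular_pair_selected:
  assumes "a < length (Gs N)" "b < length (Gs N)" "snd (Gs N ! a) \<noteq> 0" "snd (Gs N ! b) \<noteq> 0"
    and reg: "cp_regular ordR ordM m (Gs N) a b"
  shows "\<exists>j<N. cps ! j = (a, b)"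
proof -
  have "orient ordR ordM m (Gs N) a b = (a, b)" "orient ordR ordM m (Gs N) b a = (a, b)"
    using orient_regular[OF reg] by simp_all
  moreover have "covered N a b \<or> covered N b a"
    using regular_pair_distinct[OF reg] pairs_covered[of N] assms(1-4) by (meson linorder_neqE_nat order_refl)
  ultimately show ?thesis using no_pairs_left unfolding covered_def by auto
qed

text \<open>A processed pair becomes gen-rewritable through the element it produced: by
  admissibility that element is below the first component of the pair, and its
  signature is the signature of the pair.\<close>
lemma processed_pair_rewritable:
  assumes j: "j < N" "cps ! j = (a, b)" and ab: "a < length (Gs j)" "b < length (Gs j)"
    and regj: "cp_regular ordR ordM m (Gs j) a b"
    and not_rw: "\<not> cp_rewritable ordR ordM m (Gs j) (Ls j) a b"
  shows "mult_rewritable ordM m (Gs N) (Ls N) (cp_mult ordR (Gs N) a b) a"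
proof -
  define n where "n = length (Gs j)"
  have step: "gbgc_step ordR ordM m f (ss ! j) (a, b) (ss ! Suc j)" using run_step[OF j(1)] j(2) by simp
  have "set (Gs j) \<subseteq> Mmod m f" using run_invariant[of j] j(1) by simp
  then have new: "n < length (Gs (Suc j))"
    "lpp_v ordM m (fst (Gs (Suc j) ! n)) = cp_sig ordR ordM m (Gs j) a b"
    using gbgc_step_processed[OF step regj not_rw _ ab] by (simp_all add: n_def)
  have "Ls (Suc j) n a"
    using admissible j regj not_rw unfolding gbgc_admissible_def by (auto simp: Let_def n_def)
  moreover obtain zs where "Gs N = Gs (Suc j) @ zs" using run_extends[of "Suc j" N] j(1) by auto
  moreover have "\<forall>x y. x < length (Gs (Suc j)) \<longrightarrow> y < length (Gs (Suc j)) \<longrightarrow> Ls N x y = Ls (Suc j) x y"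
    using run_extends[of "Suc j" N] j(1) by simp
  ultimately have "n < length (Gs N)" "Ls N n a" "Gs N ! n = Gs (Suc j) ! n"
    using new(1) ab(1) by (auto simp: n_def nth_append)
  moreover obtain zs' where "Gs N = Gs j @ zs'" using run_extends[of j N] j(1) by auto
  then have "cp_sig ordR ordM m (Gs N) a b = cp_sig ordR ordM m (Gs j) a b"
    using critical_pair_append(2) ab by blast
  moreover have "term_dvd (cp_sig ordR ordM m (Gs N) a b) (cp_sig ordR ordM m (Gs N) a b)"
    by (cases "cp_sig ordR ordM m (Gs N) a b") (auto simp: term_dvd_def pp_dvd_refl)
  ultimately show ?thesis using new(2) unfolding mult_rewritable_def cp_sig_def by metis
qed

text \<open>Every regular pair of the output is gen-rewritable by the output: when it was
  selected it was either gen-rewritable then, which persists, or it was processed.\<close>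
lemma output_pairs_rewritable:
  assumes "a < length (Gs N)" "b < length (Gs N)" "snd (Gs N ! a) \<noteq> 0" "snd (Gs N ! b) \<noteq> 0"
    and reg: "cp_regular ordR ordM m (Gs N) a b"
  shows "cp_rewritable ordR ordM m (Gs N) (Ls N) a b"
proof -
  obtain j where j: "j < N" "cps ! j = (a, b)" using regular_pair_selected[OF assms] by blast
  have step: "gbgc_step ordR ordM m f (ss ! j) (a, b) (ss ! Suc j)" using run_step[OF j(1)] j(2) by simp
  have ab: "a < length (Gs j)" "b < length (Gs j)"
    using run_invariant[of j] j(1) gbgc_step_selected[OF step] by auto
  obtain zs where zs: "Gs N = Gs j @ zs" using run_extends[of j N] j(1) by auto
  have lN: "\<forall>x y. x < length (Gs j) \<longrightarrow> y < length (Gs j) \<longrightarrow> Ls N x y = Ls j x y"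
    using run_extends[of j N] j(1) by simp
  have regj: "cp_regular ordR ordM m (Gs j) a b" using reg critical_pair_append(3)[OF zs ab] by simp
  show ?thesis
  proof (cases "cp_rewritable ordR ordM m (Gs j) (Ls j) a b")
    case True
    then show ?thesis
      using mult_rewritable_append[OF zs ab(1) lN] mult_rewritable_append[OF zs ab(2) lN]
        critical_pair_append(1)[OF zs ab] critical_pair_append(1)[OF zs ab(2,1)]
      unfolding cp_rewritable_def by auto
  next
    case False
    then show ?thesis using processed_pair_rewritable[OF j ab regj] by (simp add: cp_rewritable_def)
  qed
qed

lemma output_is_SGB: "is_SGB ordR ordM m f (set (gG (last ss)))"
proof -
  obtain zs where zs: "Gs N = G_init m f @ zs" using run_extends[of 0 N] initial_state(1) by auto
  have "rewrite_closed ordR ordM m f (Gs N) (Ls N)"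
  proof (unfold_locales)
    show "set (Gs N) \<subseteq> Mmod m f" "spo_on (length (Gs N)) (Ls N)" using run_invariant[of N] by simp_all
    show "i < length (Gs N) \<and> Gs N ! i = (unitv i, f i)" if "i < m" for i
      using zs that G_init_length[of m f] G_init_nth[OF that, of f] by (simp add: nth_append)
  qed (rule output_pairs_rewritable)
  then show ?thesis using rewrite_closed.SGB_criterion last_state by metis
qed

end

theorem theorem1:
  fixes ordR :: "('v::finite) pp \<Rightarrow> 'v pp \<Rightarrow> bool"
    and ordM :: "'v pp \<times> nat \<Rightarrow> 'v pp \<times> nat \<Rightarrow> bool"
    and m :: nat
    and f :: "nat \<Rightarrow> ('v, 'a::field) mpoly"
    and ss :: "('v, 'a) gstate list"
    and cps :: "(nat \<times> nat) list"
  assumes "term_order ordR"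
    and "module_term_order m ordM"
    and "gbgc_run ordR ordM m f ss cps"
    and "gbgc_admissible ordR ordM m ss cps"
  shows "is_SGB ordR ordM m f (set (gG (last ss)))"
proof -
  interpret terminated_run ordR ordM m f ss cps
    using assms by (simp add: terminated_run_def terminated_run_axioms_def term_orders_def)
  show ?thesis by (rule output_is_SGB)
qed

end
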